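(* Let $2\leq m\leq n$, $i\in[n-m+1]$, and $x,y,z\in S_m$ with $x,y\leq^{(m)}_R z^{-1}$. If $D^{(n)}_{F(z)}C^{(n)}_{F(x)}=D^{(n)}_{F(z)}C^{(n)}_{F(y)}\neq0$ in $H_n^{\mathbb A}$, where $F=F^i_{m,n}$, then $D^{(m)}_zC^{(m)}_x=D^{(m)}_zC^{(m)}_y\neq0$ in $H_m^{\mathbb A}$.
   Context: $F^i_{m,n}:S_m\hookrightarrow S_n$ is $s_a\mapsto s_{a+i-1}$ ($s_a=(a,a+1)$). $\mathbb A=\mathbb Z[v,v^{-1}]$; $H_n^{\mathbb A}$ has standard basis $T_x$ with $T_xT_y=T_{xy}$ when lengths add and $T_zT_s=(v^{-1}-v)T_z+T_{zs}$ when $zs<z$. $C_x^{(n)}$ is the Kazhdan–Lusztig basis (bar-invariant under $v\mapsto v^{-1}$, $T_x\mapsto T_{x^{-1}}^{-1}$, with $C_x=T_x+\sum_{y<x}p_{y,x}T_y$, $p_{y,x}\in v\mathbb Z[v]$). $D^{(n)}_x$ is the dual KL basis: $\tau(D_xC_{y^{-1}})=\delta_{x,y}$ where $\tau(T_w)=\delta_{w,e}$. Right KL preorder: $x\leq_R y$ iff $C_y$ has nonzero coefficient in $C_xh$ for some $h$. *)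

theory Defs
  imports Main "HOL-Library.Poly_Mapping" "HOL-Combinatorics.Permutations"
begin

text \<open>Laurent polynomials: finitely supported maps int => int (group ring of Z).
  The monomial v^k is Poly_Mapping.single k 1.\<close>
type_synonym laurent = "int \<Rightarrow>\<^sub>0 int"

definition vv :: laurent where "vv = Poly_Mapping.single 1 1"
definition vinv :: laurent where "vinv = Poly_Mapping.single (-1) 1"

definition lbar :: "laurent \<Rightarrow> laurent" where
  "lbar p = Abs_poly_mapping (\<lambda>k. Poly_Mapping.lookup p (-k))"

definition in_vZv :: "laurent \<Rightarrow> bool" where
  "in_vZv p \<longleftrightarrow> (\<forall>k. Poly_Mapping.lookup p k \<noteq> 0 \<longrightarrow> k \<ge> 1)"

text \<open>S_n = permutations of {1..n}; product xy = x o y.\<close>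
definition Sn :: "nat \<Rightarrow> (nat \<Rightarrow> nat) set" where
  "Sn n = {w. w permutes {1..n}}"

definition sg :: "nat \<Rightarrow> nat \<Rightarrow> nat" where
  "sg a = Transposition.transpose a (a + 1)"

definition len :: "nat \<Rightarrow> (nat \<Rightarrow> nat) \<Rightarrow> nat" where
  "len n w = card {(i, j). 1 \<le> i \<and> i < j \<and> j \<le> n \<and> w i > w j}"

definition word_prod :: "nat list \<Rightarrow> nat \<Rightarrow> nat" where
  "word_prod as = foldr (\<lambda>a f. sg a \<circ> f) as id"

definition rword :: "nat \<Rightarrow> (nat \<Rightarrow> nat) \<Rightarrow> nat list" where
  "rword n w = (SOME as. set as \<subseteq> {1..<n} \<and> length as = len n w \<and> word_prod as = w)"

definition bruhat_step :: "nat \<Rightarrow> ((nat \<Rightarrow> nat) \<times> (nat \<Rightarrow> nat)) set" where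
  "bruhat_step n = {(w, w \<circ> Transposition.transpose i j) | w i j.
      w \<in> Sn n \<and> 1 \<le> i \<and> i < j \<and> j \<le> n \<and> len n (w \<circ> Transposition.transpose i j) > len n w}"

definition bruhat_lt :: "nat \<Rightarrow> (nat \<Rightarrow> nat) \<Rightarrow> (nat \<Rightarrow> nat) \<Rightarrow> bool" where
  "bruhat_lt n y x \<longleftrightarrow> (y, x) \<in> (bruhat_step n)\<^sup>+"

text \<open>The embedding F^i_{m,n}: S_m -> S_n, the homomorphism with s_a |-> s_{a+i-1}\<close>
definition Femb :: "nat \<Rightarrow> nat \<Rightarrow> nat \<Rightarrow> (nat \<Rightarrow> nat) \<Rightarrow> (nat \<Rightarrow> nat)" where
  "Femb m n i x = word_prod (map (\<lambda>a. a + i - 1) (rword m x))"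

text \<open>An element sum_w h_w T_w is represented by its coefficient function h;
  elements of H_n are those supported on S_n.\<close>
type_synonym hecke = "(nat \<Rightarrow> nat) \<Rightarrow> laurent"

definition Hn :: "nat \<Rightarrow> hecke set" where
  "Hn n = {h. \<forall>w. w \<notin> Sn n \<longrightarrow> h w = 0}"

definition hzero :: hecke where "hzero = (\<lambda>_. 0)"

definition Tb :: "(nat \<Rightarrow> nat) \<Rightarrow> hecke" where
  "Tb x = (\<lambda>w. if w = x then 1 else 0)"

definition hscale :: "laurent \<Rightarrow> hecke \<Rightarrow> hecke" where
  "hscale c h = (\<lambda>w. c * h w)"

definition hsum :: "nat \<Rightarrow> ((nat \<Rightarrow> nat) \<Rightarrow> hecke) \<Rightarrow> hecke" where
  "hsum n f = (\<lambda>u. \<Sum>w\<in>Sn n. f w u)"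

text \<open>right multiplication by T_{s_a}:
  T_w T_s = T_{ws} if ws > w,  T_w T_s = (v^-1 - v) T_w + T_{ws} if ws < w\<close>
definition mult_s :: "nat \<Rightarrow> hecke \<Rightarrow> nat \<Rightarrow> hecke" where
  "mult_s n h a = (\<lambda>u. h (u \<circ> sg a)
       + (if len n (u \<circ> sg a) < len n u then (vinv - vv) * h u else 0))"

text \<open>right multiplication by T_{s_a}^{-1} = T_{s_a} + (v - v^-1)\<close>
definition mult_sinv :: "nat \<Rightarrow> hecke \<Rightarrow> nat \<Rightarrow> hecke" where
  "mult_sinv n h a = (\<lambda>u. mult_s n h a u + (vv - vinv) * h u)"

definition mult_T :: "nat \<Rightarrow> hecke \<Rightarrow> (nat \<Rightarrow> nat) \<Rightarrow> hecke" where
  "mult_T n h w = foldl (mult_s n) h (rword n w)"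

definition hmult :: "nat \<Rightarrow> hecke \<Rightarrow> hecke \<Rightarrow> hecke" where
  "hmult n h g = hsum n (\<lambda>w. hscale (g w) (mult_T n h w))"

text \<open>bar(T_w) = T_{w^-1}^{-1} = T_{s_a1}^{-1} ... T_{s_ak}^{-1} for w = s_a1 ... s_ak reduced\<close>
definition barT :: "nat \<Rightarrow> (nat \<Rightarrow> nat) \<Rightarrow> hecke" where
  "barT n w = foldl (mult_sinv n) (Tb id) (rword n w)"

definition hbar :: "nat \<Rightarrow> hecke \<Rightarrow> hecke" where
  "hbar n h = hsum n (\<lambda>w. hscale (lbar (h w)) (barT n w))"

definition tau :: "hecke \<Rightarrow> laurent" where
  "tau h = h id"

definition KL :: "nat \<Rightarrow> (nat \<Rightarrow> nat) \<Rightarrow> hecke" where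
  "KL n x = (THE h. h \<in> Hn n \<and> hbar n h = h \<and> h x = 1 \<and>
      (\<forall>y. y \<noteq> x \<longrightarrow> h y \<noteq> 0 \<longrightarrow> bruhat_lt n y x) \<and>
      (\<forall>y. y \<noteq> x \<longrightarrow> in_vZv (h y)))"

definition DKL :: "nat \<Rightarrow> (nat \<Rightarrow> nat) \<Rightarrow> hecke" where
  "DKL n x = (THE h. h \<in> Hn n \<and>
      (\<forall>y\<in>Sn n. tau (hmult n h (KL n (inv y))) = (if x = y then 1 else 0)))"

definition KL_R_le :: "nat \<Rightarrow> (nat \<Rightarrow> nat) \<Rightarrow> (nat \<Rightarrow> nat) \<Rightarrow> bool" where
  "KL_R_le n x y \<longleftrightarrow> (\<exists>h\<in>Hn n. \<exists>c. hmult n (KL n x) h = hsum n (\<lambda>w. hscale (c w) (KL n w))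
        \<and> c y \<noteq> 0)"

end

theory Submission
  imports Defs "HOL-Library.Function_Algebras"
begin

(*
  Write F for F^i_{m,n}. It is the shift u |-> perm_shift (i - 1) u, a monomorphism
  S_m -> S_n preserving length and the Bruhat order. Its linear extension F_* : H_m -> H_n
  commutes with right multiplication by the generators and with the bar involution, so F_*(C_x)
  satisfies the defining properties of C_(F x) and equals it. Reading off the coefficients at
  F(S_m) gives a linear map pi : H_n -> H_m with pi(h F_*(g)) = pi(h) g and tau o pi = tau; hence
  pi(D_(F z)) is dual to the Kazhdan-Lusztig basis of H_m, i.e. equals D_z, and
  D_z C_x = pi(D_(F z) C_(F x)). So the equality in H_n descends to H_m. Nonvanishing only needs
  x <=_R z^-1: if C_x h = sum_w c_w C_w with c_(z^-1) /= 0, then tau(D_z C_x h) = c_(z^-1).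

  Because C_x and D_x are given by definite descriptions, the argument needs their existence and
  uniqueness; both come from the triangularity of the bar involution with respect to the Bruhat
  order, by the usual induction on length.
*)

section \<open>Laurent polynomials and their bar involution\<close>

lemma lookup_lbar[simp]: "Poly_Mapping.lookup (lbar p) k = Poly_Mapping.lookup p (-k)"
proof -
  have "finite {k. Poly_Mapping.lookup p (-k) \<noteq> 0}"
  proof -
    have "{k. Poly_Mapping.lookup p (-k) \<noteq> 0} = uminus ` {k. Poly_Mapping.lookup p k \<noteq> 0}"
      by (auto simp: image_iff) (metis minus_minus)
    then show ?thesis by (simp add: finite_lookup)
  qed
  then show ?thesis unfolding lbar_def by simp
qed

lemma lbar_add[simp]: "lbar (p + q) = lbar p + lbar q"
  by (rule poly_mapping_eqI) (simp add: lookup_add)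
lemma lbar_diff[simp]: "lbar (p - q) = lbar p - lbar q"
  by (rule poly_mapping_eqI) (simp add: lookup_minus)
lemma lbar_zero[simp]: "lbar 0 = 0"
  by (rule poly_mapping_eqI) simp
lemma lbar_lbar[simp]: "lbar (lbar p) = p"
  by (rule poly_mapping_eqI) simp
lemma lbar_single[simp]: "lbar (Poly_Mapping.single k c) = Poly_Mapping.single (-k) c"
  by (rule poly_mapping_eqI) (simp add: lookup_single when_def)
lemma lbar_one[simp]: "lbar 1 = 1"
  by (metis lbar_single minus_zero single_one)

lemma lbar_mult_single: "lbar (Poly_Mapping.single k 1 * b) = lbar (Poly_Mapping.single k 1) * lbar b"
proof -
  have "Poly_Mapping.keys b \<subseteq> UNIV" by simp
  then show ?thesis
  proof (induction b rule: frag_induction)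
    case zero then show ?case by simp
  next
    case (one x) then show ?case by (simp add: mult_single)
  next
    case (diff a b) then show ?case by (simp add: right_diff_distrib)
  qed
qed

lemma lbar_mult[simp]: "lbar (a * b) = lbar a * lbar b"
proof -
  have "Poly_Mapping.keys a \<subseteq> UNIV" by simp
  then show ?thesis
  proof (induction a rule: frag_induction)
    case zero then show ?case by simp
  next
    case (one x) then show ?case using lbar_mult_single by simp
  next
    case (diff a c) then show ?case by (simp add: left_diff_distrib)
  qed
qed

lemma lbar_vv[simp]: "lbar vv = vinv" and lbar_vinv[simp]: "lbar vinv = vv"
  by (simp_all add: vv_def vinv_def)

lemma in_vZv_add: "in_vZv p \<Longrightarrow> in_vZv q \<Longrightarrow> in_vZv (p + q)"
  unfolding in_vZv_def by (metis add.right_neutral add_0 lookup_add)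

lemma in_vZv_zero[simp]: "in_vZv 0"
  unfolding in_vZv_def by simp

lemma in_vZv_mult: "in_vZv p \<Longrightarrow> in_vZv q \<Longrightarrow> in_vZv (p * q)"
proof -
  assume p: "in_vZv p" and q: "in_vZv q"
  show ?thesis unfolding in_vZv_def
  proof (intro allI impI)
    fix k assume "Poly_Mapping.lookup (p * q) k \<noteq> 0"
    then obtain l where "Poly_Mapping.lookup p l * (\<Sum>r. Poly_Mapping.lookup q r when k = l + r) \<noteq> 0"
      by (auto simp: lookup_mult elim: Sum_any.not_neutral_obtains_not_neutral)
    then obtain r where "Poly_Mapping.lookup p l \<noteq> 0" "Poly_Mapping.lookup q r \<noteq> 0" "k = l + r"
      by (auto simp: when_def elim: Sum_any.not_neutral_obtains_not_neutral split: if_splits)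
    with p q show "1 \<le> k" unfolding in_vZv_def by fastforce
  qed
qed

lemma in_vZv_sum: "finite A \<Longrightarrow> (\<And>a. a \<in> A \<Longrightarrow> in_vZv (f a)) \<Longrightarrow> in_vZv (sum f A)"
  by (induction A rule: finite_induct) (auto intro: in_vZv_add)

lemma in_vZv_bar_fix: "in_vZv p \<Longrightarrow> lbar p = p \<Longrightarrow> p = 0"
proof (rule poly_mapping_eqI)
  fix k assume p: "in_vZv p" and b: "lbar p = p"
  have "Poly_Mapping.lookup p k = Poly_Mapping.lookup p (-k)"
    by (metis b lookup_lbar)
  with p show "Poly_Mapping.lookup p k = Poly_Mapping.lookup 0 k"
    unfolding in_vZv_def by (metis linorder_not_le lookup_zero neg_0_le_iff_le not_one_le_zero order.trans zero_less_one_class.zero_le_one)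
qed

definition pos_part :: "laurent \<Rightarrow> laurent" where
  "pos_part a = Abs_poly_mapping (\<lambda>k. if 1 \<le> k then Poly_Mapping.lookup a k else 0)"

lemma lookup_pos_part[simp]: "Poly_Mapping.lookup (pos_part a) k = (if 1 \<le> k then Poly_Mapping.lookup a k else 0)"
proof -
  have "finite {k. (if 1 \<le> k then Poly_Mapping.lookup a k else 0) \<noteq> 0}"
    by (rule finite_subset[OF _ finite_lookup[of a]]) auto
  then show ?thesis unfolding pos_part_def by simp
qed

lemma pos_part_vZv: "in_vZv (pos_part a)"
  unfolding in_vZv_def by simp

lemma pos_part_antisym: "lbar a = - a \<Longrightarrow> pos_part a - lbar (pos_part a) = a"
proof (rule poly_mapping_eqI)
  fix k assume h: "lbar a = - a"
  have ak: "Poly_Mapping.lookup a (-k) = - Poly_Mapping.lookup a k" for k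
    using arg_cong[OF h, of "\<lambda>p. Poly_Mapping.lookup p k"] by (simp add: lookup_minus)
  have a0: "Poly_Mapping.lookup a 0 = 0" using ak[of 0] by simp
  show "Poly_Mapping.lookup (pos_part a - lbar (pos_part a)) k = Poly_Mapping.lookup a k"
    using ak[of k] a0 by (cases "k = 0") (auto simp: lookup_minus)
qed


section \<open>Permutations and their length\<close>

lemma Sn_finite[simp]: "finite (Sn n)"
  unfolding Sn_def by (rule finite_permutations) simp

lemma Sn_id[simp]: "id \<in> Sn n"
  unfolding Sn_def by simp

lemma Sn_comp[intro]: "x \<in> Sn n \<Longrightarrow> y \<in> Sn n \<Longrightarrow> x \<circ> y \<in> Sn n"
  unfolding Sn_def by (simp add: permutes_compose)

lemma Sn_inv[intro]: "x \<in> Sn n \<Longrightarrow> inv x \<in> Sn n"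
  unfolding Sn_def by (simp add: permutes_inv)

lemma Sn_inv_inv[simp]: "x \<in> Sn n \<Longrightarrow> inv (inv x) = x"
  unfolding Sn_def by (simp add: permutes_inv_inv)

lemma Sn_inv_comp: "x \<in> Sn n \<Longrightarrow> x \<circ> inv x = id" "x \<in> Sn n \<Longrightarrow> inv x \<circ> x = id"
  unfolding Sn_def by (simp_all add: permutes_inv_o)

lemma Sn_inv_apply[simp]: "x \<in> Sn n \<Longrightarrow> x (inv x k) = k" "x \<in> Sn n \<Longrightarrow> inv x (x k) = k"
  unfolding Sn_def by (simp_all add: permutes_inverses)

lemma Sn_inj: "x \<in> Sn n \<Longrightarrow> inj x"
  using permutes_inj[of x "{1..n}"] by (simp add: Sn_def)

lemma Sn_bij: "x \<in> Sn n \<Longrightarrow> bij x"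
  using permutes_bij[of x "{1..n}"] by (simp add: Sn_def)

lemma Sn_out: "x \<in> Sn n \<Longrightarrow> k \<notin> {1..n} \<Longrightarrow> x k = k"
  using permutes_not_in[of x "{1..n}" k] by (simp add: Sn_def)

lemma Sn_in: "x \<in> Sn n \<Longrightarrow> k \<in> {1..n} \<Longrightarrow> x k \<in> {1..n}"
  using permutes_in_image[of x "{1..n}" k] by (simp add: Sn_def)

lemma Sn_inv_comp_distrib: "x \<in> Sn n \<Longrightarrow> y \<in> Sn n \<Longrightarrow> inv (x \<circ> y) = inv y \<circ> inv x"
  by (simp add: Sn_bij o_inv_distrib)

lemma sg_Sn[intro]: "1 \<le> a \<Longrightarrow> a < n \<Longrightarrow> sg a \<in> Sn n"
  unfolding Sn_def sg_def by (simp add: permutes_swap_id)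

lemma sg_sg[simp]: "sg a \<circ> sg a = id"
  unfolding sg_def by simp

lemma sg_sg_apply[simp]: "sg a (sg a k) = k"
  unfolding sg_def by simp

lemma sg_comp_sg[simp]: "w \<circ> sg a \<circ> sg a = w"
  by (simp add: comp_assoc)

lemma inv_sg[simp]: "inv (sg a) = sg a"
  unfolding sg_def by simp

lemma sg_a[simp]: "sg a a = a + 1" and sg_a1[simp]: "sg a (a+1) = a"
  unfolding sg_def by simp_all

lemma sg_Suc[simp]: "sg a (Suc a) = a"
  unfolding sg_def by simp

lemma sg_apply: "sg a k = (if k = a then a + 1 else if k = a + 1 then a else k)"
  unfolding sg_def transpose_def by simp
lemma sg_range: "1 \<le> a \<Longrightarrow> a < n \<Longrightarrow> 1 \<le> k \<Longrightarrow> k \<le> n \<Longrightarrow> 1 \<le> sg a k \<and> sg a k \<le> n"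
  by (simp add: sg_apply)
lemma sg_order: "p < q \<Longrightarrow> (p, q) \<noteq> (a, a + 1) \<Longrightarrow> sg a p < sg a q"
  by (auto simp add: sg_apply)
lemma transpose_cases: "(i::nat) < j \<Longrightarrow> p < q \<Longrightarrow> \<not> (Transposition.transpose i j p < Transposition.transpose i j q) \<Longrightarrow>
   (p = i \<and> q = j) \<or> (p = i \<and> i < q \<and> q < j) \<or> (i < p \<and> p < j \<and> q = j)"
  unfolding transpose_def by (simp split: if_splits; presburger)
lemma transpose_range: "1 \<le> (i::nat) \<Longrightarrow> j \<le> n \<Longrightarrow> i < j \<Longrightarrow> 1 \<le> k \<Longrightarrow> k \<le> n \<Longrightarrow> 1 \<le> Transposition.transpose i j k \<and> Transposition.transpose i j k \<le> n"
  unfolding transpose_def by presburger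

definition inversions :: "nat \<Rightarrow> (nat \<Rightarrow> nat) \<Rightarrow> (nat \<times> nat) set" where
  "inversions n w = {(i, j). 1 \<le> i \<and> i < j \<and> j \<le> n \<and> w i > w j}"

lemma len_inversions: "len n w = card (inversions n w)"
  unfolding len_def inversions_def by simp

lemma inversions_finite[simp]: "finite (inversions n w)"
  by (rule finite_subset[of _ "{1..n} \<times> {1..n}"]) (auto simp: inversions_def)

lemma len_up:
  assumes a: "1 \<le> a" "a < n" and w: "w a < w (a + 1)"
  shows "len n (w \<circ> sg a) = len n w + 1"
proof -
  let ?f = "\<lambda>(i, j). (sg a i, sg a j)"
  have eq: "inversions n (w \<circ> sg a) = insert (a, a + 1) (?f ` inversions n w)"
  proof (rule set_eqI, rule iffI)
    fix pq assume "pq \<in> inversions n (w \<circ> sg a)"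
    then obtain p q where pq: "pq = (p, q)" "1 \<le> p" "p < q" "q \<le> n" "w (sg a p) > w (sg a q)"
      by (auto simp: inversions_def)
    show "pq \<in> insert (a, a + 1) (?f ` inversions n w)"
    proof (cases "pq = (a, a + 1)")
      case False
      have "(sg a p, sg a q) \<in> inversions n w"
        using pq False a sg_range[of a n p] sg_range[of a n q] sg_order[of p q a] by (auto simp: inversions_def)
      moreover have "pq = ?f (sg a p, sg a q)" using pq by simp
      ultimately show ?thesis by blast
    qed simp
  next
    fix pq assume "pq \<in> insert (a, a + 1) (?f ` inversions n w)"
    then show "pq \<in> inversions n (w \<circ> sg a)"
    proof
      assume "pq = (a, a + 1)" then show ?thesis using a w by (auto simp: inversions_def)
    next
      assume "pq \<in> ?f ` inversions n w"
      then obtain p q where "pq = (sg a p, sg a q)" "1 \<le> p" "p < q" "q \<le> n" "w p > w q"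
        by (auto simp: inversions_def)
      moreover have "(p, q) \<noteq> (a, a+1)" using \<open>w p > w q\<close> w by auto
      ultimately show ?thesis using a sg_range[of a n p] sg_range[of a n q] sg_order[of p q a]
        by (auto simp: inversions_def)
    qed
  qed
  have inj: "inj_on ?f (inversions n w)"
    by (rule inj_onI) (auto simp: sg_def transpose_def split: if_splits)
  have notin: "(a, a + 1) \<notin> ?f ` inversions n w"
  proof
    assume "(a, a + 1) \<in> ?f ` inversions n w"
    then obtain p q where "(p, q) \<in> inversions n w" "sg a p = a" "sg a q = a + 1" by auto
    then have "p = a + 1" "q = a" by (metis sg_a sg_sg_apply)+
    with \<open>(p, q) \<in> inversions n w\<close> show False by (auto simp: inversions_def)
  qed
  show ?thesis unfolding len_inversions eq
    using notin inj by (simp add: card_image)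
qed

lemma len_down:
  assumes a: "1 \<le> a" "a < n" and w: "w a > w (a + 1)"
  shows "len n (w \<circ> sg a) + 1 = len n w"
proof -
  have "len n (w \<circ> sg a \<circ> sg a) = len n (w \<circ> sg a) + 1"
    by (rule len_up) (use a w in auto)
  then show ?thesis by simp
qed

lemma len_sg_cases:
  assumes "w \<in> Sn n" "1 \<le> a" "a < n"
  shows "(w a < w (a+1) \<and> len n (w \<circ> sg a) = len n w + 1) \<or>
         (w a > w (a+1) \<and> len n (w \<circ> sg a) + 1 = len n w)"
proof -
  have "w a \<noteq> w (a+1)" using Sn_inj[OF assms(1)] by (metis inj_eq n_not_Suc_n Suc_eq_plus1)
  then show ?thesis using len_up[OF assms(2,3)] len_down[OF assms(2,3)] by (meson linorder_neqE_nat)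
qed

lemma len_sg_less_iff:
  assumes "w \<in> Sn n" "1 \<le> a" "a < n"
  shows "len n (w \<circ> sg a) < len n w \<longleftrightarrow> w (a+1) < w a"
  using len_sg_cases[OF assms] by auto

lemma inj_on_sort_pair:
  fixes t :: "'a::linorder \<Rightarrow> 'a"
  assumes involution: "\<And>x. t (t x) = x"
  shows "inj_on (\<lambda>(p, q). if t p < t q then (t p, t q) else (p, q)) {(p, q). p < q}"
proof (rule inj_onI, clarsimp)
  fix p q p' q' :: 'a
  assume lt: "p < q" "p' < q'"
    and eq: "(if t p < t q then (t p, t q) else (p, q)) = (if t p' < t q' then (t p', t q') else (p', q'))"
  have t_inj: "t x = t y \<Longrightarrow> x = y" for x y by (metis involution)
  show "p = p' \<and> q = q'"
  proof (cases "t p < t q"; cases "t p' < t q'")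
    assume "t p < t q" "\<not> t p' < t q'"
    then have "t p = p'" "t q = q'" using eq by auto
    then have "t p' = p" "t q' = q" using involution by auto
    with \<open>\<not> t p' < t q'\<close> lt show ?thesis by simp
  next
    assume "\<not> t p < t q" "t p' < t q'"
    then have "t p' = p" "t q' = q" using eq by auto
    then have "t p = p'" "t q = q'" using involution by auto
    with \<open>\<not> t p < t q\<close> lt show ?thesis by simp
  qed (use eq t_inj in auto)
qed

lemma len_transp_up:
  assumes ij: "1 \<le> i" "i < j" "j \<le> n" and w: "w i < w j"
  shows "len n w < len n (w \<circ> Transposition.transpose i j)"
proof -
  let ?t = "Transposition.transpose i j"
  let ?f = "\<lambda>(p, q). if ?t p < ?t q then (?t p, ?t q) else (p, q)"
  have img: "?f ` inversions n w \<subseteq> inversions n (w \<circ> ?t) - {(i, j)}"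
  proof
    fix x assume "x \<in> ?f ` inversions n w"
    then obtain p q where pq: "(p, q) \<in> inversions n w" "x = ?f (p, q)" by auto
    then have pq': "1 \<le> p" "p < q" "q \<le> n" "w p > w q" by (auto simp: inversions_def)
    show "x \<in> inversions n (w \<circ> ?t) - {(i, j)}"
    proof (cases "?t p < ?t q")
      case True
      have "(?t p, ?t q) \<noteq> (i, j)"
        using pq'(2) ij(2) by (auto simp: transpose_def split: if_splits)
      then show ?thesis using True pq pq' ij transpose_range[of i j n p] transpose_range[of i j n q]
        by (auto simp: inversions_def)
    next
      case False
      have x: "x = (p, q)" using pq False by simp
      from transpose_cases[OF ij(2) pq'(2) False] show ?thesis
      proof (elim disjE conjE)
        assume "p = i" "q = j" then show ?thesis using pq' w by simp
      next
        assume "p = i" "i < q" "q < j"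
        then show ?thesis using x pq' ij w by (auto simp: inversions_def transpose_def)
      next
        assume "i < p" "p < j" "q = j"
        then show ?thesis using x pq' ij w by (auto simp: inversions_def transpose_def)
      qed
    qed
  qed
  have inj: "inj_on ?f (inversions n w)"
    by (rule inj_on_subset[OF inj_on_sort_pair]) (auto simp: inversions_def)
  have ijin: "(i, j) \<in> inversions n (w \<circ> ?t)" using ij w by (auto simp: inversions_def)
  have "card (inversions n w) \<le> card (inversions n (w \<circ> ?t) - {(i, j)})"
    using card_inj_on_le[OF inj img] by simp
  also have "\<dots> < card (inversions n (w \<circ> ?t))"
    using card_Diff1_less[OF inversions_finite ijin] by simp
  finally show ?thesis by (simp add: len_inversions)
qed

lemma len_id[simp]: "len n id = 0"
proof -
  have "inversions n id = {}" by (auto simp: inversions_def)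
  then show ?thesis by (simp add: len_inversions)
qed

lemma len_inv:
  assumes w: "w \<in> Sn n"
  shows "len n (inv w) = len n w"
proof -
  let ?f = "\<lambda>(i, j). (w j, w i)"
  have "?f ` inversions n w = inversions n (inv w)"
  proof (rule set_eqI, rule iffI)
    fix x assume "x \<in> ?f ` inversions n w"
    then obtain i j where x: "x = (w j, w i)" "1 \<le> i" "i < j" "j \<le> n" "w i > w j"
      by (auto simp: inversions_def)
    have "w j \<in> {1..n}" "w i \<in> {1..n}" using Sn_in[OF w] x by auto
    moreover have "inv w (w j) > inv w (w i)" using x w by simp
    ultimately show "x \<in> inversions n (inv w)" using x unfolding inversions_def by auto
  next
    fix x assume "x \<in> inversions n (inv w)"
    then obtain p q where x: "x = (p, q)" "1 \<le> p" "p < q" "q \<le> n" "inv w p > inv w q"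
      by (auto simp: inversions_def)
    have "inv w p \<in> {1..n}" "inv w q \<in> {1..n}" using Sn_in[OF Sn_inv[OF w]] x by auto
    moreover have "w (inv w q) > w (inv w p)" using x w by simp
    ultimately have "(inv w q, inv w p) \<in> inversions n w" using x unfolding inversions_def by auto
    moreover have "x = ?f (inv w q, inv w p)" using x w by simp
    ultimately show "x \<in> ?f ` inversions n w" by blast
  qed
  moreover have "inj_on ?f (inversions n w)"
  proof (rule inj_onI)
    fix x y assume "x \<in> inversions n w" "y \<in> inversions n w" "?f x = ?f y"
    then show "x = y" using injD[OF Sn_inj[OF w]] by (cases x; cases y) auto
  qed
  ultimately show ?thesis unfolding len_inversions by (metis card_image)
qed


section \<open>Words and reduced expressions\<close>

lemma word_prod_nil[simp]: "word_prod [] = id"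
  by (simp add: word_prod_def)
lemma word_prod_cons[simp]: "word_prod (a # as) = sg a \<circ> word_prod as"
  by (simp add: word_prod_def)
lemma word_prod_append[simp]: "word_prod (as @ bs) = word_prod as \<circ> word_prod bs"
  by (induction as) (auto simp: comp_assoc)

lemma sg_Sn_Suc0[intro]: "Suc 0 \<le> a \<Longrightarrow> a < n \<Longrightarrow> sg a \<in> Sn n"
  using sg_Sn by simp

lemma Sn_comp_sg[intro]: "w \<in> Sn n \<Longrightarrow> Suc 0 \<le> a \<Longrightarrow> a < n \<Longrightarrow> w \<circ> sg a \<in> Sn n"
  using sg_Sn Sn_comp by simp

lemma word_prod_Sn: "set as \<subseteq> {1..<n} \<Longrightarrow> word_prod as \<in> Sn n"
proof (induction as)
  case (Cons a as)
  then have "sg a \<in> Sn n" "word_prod as \<in> Sn n" by auto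
  then show ?case unfolding word_prod_cons by (rule Sn_comp)
qed simp

lemma bij_sg[simp]: "bij (sg a)"
  by (simp add: sg_def)

lemma bij_word_prod: "bij (word_prod as)"
proof (induction as)
  case Nil then show ?case by (simp add: id_def[symmetric])
next
  case (Cons a as) show ?case unfolding word_prod_cons by (rule bij_comp[OF Cons.IH bij_sg[of a]])
qed

lemma word_prod_rev: "inv (word_prod as) = word_prod (rev as)"
proof (induction as)
  case Nil then show ?case by simp
next
  case (Cons a as)
  have "inv (sg a \<circ> word_prod as) = inv (word_prod as) \<circ> inv (sg a)"
    by (rule o_inv_distrib) (auto simp: bij_word_prod sg_def)
  moreover have "word_prod (rev (a # as)) = word_prod (rev as) \<circ> sg a"
    by (simp only: rev.simps word_prod_append word_prod_cons word_prod_nil comp_id)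
  ultimately show ?case using Cons by (simp only: word_prod_cons inv_sg)
qed

lemma len_step_le:
  assumes "w \<in> Sn n" "1 \<le> a" "a < n"
  shows "len n (w \<circ> sg a) \<le> len n w + 1" "len n w \<le> len n (w \<circ> sg a) + 1"
  using len_sg_cases[OF assms] by auto

lemma len_word_prod_le:
  "set as \<subseteq> {1..<n} \<Longrightarrow> w \<in> Sn n \<Longrightarrow> len n (w \<circ> word_prod as) \<le> len n w + length as"
proof (induction as arbitrary: w)
  case Nil then show ?case by simp
next
  case (Cons a as)
  have a: "1 \<le> a" "a < n" using Cons.prems(1) by auto
  have s: "set as \<subseteq> {1..<n}" using Cons.prems(1) by auto
  have "w \<circ> sg a \<in> Sn n" using Cons.prems(2) a by (simp add: Sn_comp sg_Sn)
  then have "len n ((w \<circ> sg a) \<circ> word_prod as) \<le> len n (w \<circ> sg a) + length as"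
    by (rule Cons.IH[OF s])
  moreover have "len n (w \<circ> sg a) \<le> len n w + 1" using len_step_le[OF Cons.prems(2) a] by simp
  moreover have "len n (w \<circ> word_prod (a # as)) = len n ((w \<circ> sg a) \<circ> word_prod as)"
    by (simp only: word_prod_cons comp_assoc)
  ultimately show ?case by (simp only: length_Cons)
qed

lemma len_word_prod_le': "set as \<subseteq> {1..<n} \<Longrightarrow> len n (word_prod as) \<le> length as"
  using len_word_prod_le[of as n id] by simp

definition reduced :: "nat \<Rightarrow> nat list \<Rightarrow> bool" where
  "reduced n as \<longleftrightarrow> set as \<subseteq> {1..<n} \<and> len n (word_prod as) = length as"

lemma reduced_rev: "reduced n as \<Longrightarrow> reduced n (rev as)"
  unfolding reduced_def
  by (metis len_inv set_rev word_prod_Sn word_prod_rev length_rev)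

lemma reduced_append1: "reduced n (as @ bs) \<Longrightarrow> reduced n as"
proof -
  assume r: "reduced n (as @ bs)"
  then have s: "set as \<subseteq> {1..<n}" "set bs \<subseteq> {1..<n}" by (auto simp: reduced_def)
  have "length as + length bs = len n (word_prod as \<circ> word_prod bs)"
    using r by (simp add: reduced_def)
  also have "\<dots> \<le> len n (word_prod as) + length bs"
    by (rule len_word_prod_le[OF s(2) word_prod_Sn[OF s(1)]])
  finally have "length as \<le> len n (word_prod as)" by simp
  with len_word_prod_le'[OF s(1)] s show ?thesis by (simp add: reduced_def)
qed

lemma reduced_append2: "reduced n (as @ bs) \<Longrightarrow> reduced n bs"
proof -
  assume "reduced n (as @ bs)"
  then have "reduced n (rev bs @ rev as)" using reduced_rev by fastforce
  then have "reduced n (rev bs)" by (rule reduced_append1)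
  then show ?thesis using reduced_rev by fastforce
qed

lemma reduced_snoc:
  assumes r: "reduced n as" and a: "1 \<le> a" "a < n"
  shows "reduced n (as @ [a]) \<longleftrightarrow> word_prod as a < word_prod as (a + 1)"
proof -
  have s: "set as \<subseteq> {1..<n}" using r by (simp add: reduced_def)
  have w: "word_prod as \<in> Sn n" using word_prod_Sn[OF s] .
  show ?thesis
    using len_sg_cases[OF w a] r a s unfolding reduced_def by auto
qed

lemma reduced_snoc_len:
  assumes "reduced n (as @ [a])"
  shows "len n (word_prod as \<circ> sg a) = len n (word_prod as) + 1"
    "word_prod as a < word_prod as (a + 1)" "1 \<le> a" "a < n"
proof -
  have r: "reduced n as" using reduced_append1 assms by blast
  have a: "1 \<le> a" "a < n" using assms by (auto simp: reduced_def)
  show "word_prod as a < word_prod as (a + 1)" using reduced_snoc[OF r a] assms by simp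
  then show "len n (word_prod as \<circ> sg a) = len n (word_prod as) + 1"
    using len_up[OF a] by simp
  show "1 \<le> a" "a < n" by fact+
qed

lemma reduced_nil[simp]: "reduced n []"
  by (simp add: reduced_def)

lemma ascending_less:
  fixes w :: "nat \<Rightarrow> nat"
  assumes asc: "\<And>a. 1 \<le> a \<Longrightarrow> a < n \<Longrightarrow> w a < w (a + 1)"
    and pq: "1 \<le> p" "p < q" "q \<le> n"
  shows "w p < w q"
  using pq
proof (induction q rule: nat_less_induct)
  case (1 q)
  show ?case
  proof (cases "p = q - 1")
    case True then show ?thesis using asc[of p] 1 by auto
  next
    case False
    then have "w p < w (q - 1)" using 1 by auto
    also have "w (q - 1) < w q" using asc[of "q - 1"] 1 by auto
    finally show ?thesis .
  qed
qed

lemma Sn_ascending_eq_id: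
  assumes w: "w \<in> Sn n" and ni: "\<And>a. 1 \<le> a \<Longrightarrow> a < n \<Longrightarrow> w a < w (a + 1)"
  shows "w = id"
proof -
  note mono = ascending_less[of n w, OF ni]
  have "w k = k" if "1 \<le> k" "k \<le> n" for k
    using that
  proof (induction k rule: nat_less_induct)
    case (1 k)
    have IH: "\<And>j. 1 \<le> j \<Longrightarrow> j < k \<Longrightarrow> w j = j" using 1 by auto
    have wk: "w k \<in> {1..n}" using Sn_in[OF w] 1 by auto
    have "w k \<ge> k"
    proof (rule ccontr)
      assume "\<not> k \<le> w k"
      then have "w (w k) = w k" using IH wk by auto
      then have "w k = k" using Sn_inj[OF w] by (metis inj_eq)
      then show False using \<open>\<not> k \<le> w k\<close> by simp
    qed
    obtain j where j: "w j = k" "j \<in> {1..n}" using Sn_in[OF Sn_inv[OF w], of k] 1 Sn_inv_apply[OF w] by force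
    have "j = k"
    proof (rule ccontr)
      assume "j \<noteq> k"
      then consider "j < k" | "j > k" by linarith
      then show False
      proof cases
        case 1 then show False using IH j \<open>w k \<ge> k\<close> by auto
      next
        case 2 then have "w k < w j" using mono[of k j] j \<open>1 \<le> k\<close> by auto
        then show False using j \<open>w k \<ge> k\<close> by simp
      qed
    qed
    then show ?case using j by simp
  qed
  then show ?thesis using Sn_out[OF w] by (intro ext) (metis atLeastAtMost_iff id_apply)
qed

lemma Sn_descent_exists:
  assumes w: "w \<in> Sn n" and l: "0 < len n w"
  shows "\<exists>a. 1 \<le> a \<and> a < n \<and> w (a + 1) < w a"
proof (rule ccontr)
  assume "\<not> ?thesis"
  then have "\<And>a. 1 \<le> a \<Longrightarrow> a < n \<Longrightarrow> w a < w (a + 1)"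
    using Sn_inj[OF w] by (metis inj_eq linorder_neqE_nat n_not_Suc_n Suc_eq_plus1)
  then have "w = id" using Sn_ascending_eq_id[OF w] by blast
  then show False using l by simp
qed

lemma reduced_word_exists: "w \<in> Sn n \<Longrightarrow> \<exists>as. set as \<subseteq> {1..<n} \<and> length as = len n w \<and> word_prod as = w"
proof (induction "len n w" arbitrary: w)
  case 0
  then have "w = id" using Sn_descent_exists[OF 0(2)] Sn_ascending_eq_id[OF 0(2)]
    by (metis Sn_inj inj_eq linorder_neqE_nat n_not_Suc_n Suc_eq_plus1 len_sg_less_iff not_less0)
  then show ?case using 0 by (intro exI[of _ "[]"]) simp
next
  case (Suc k)
  obtain a where a: "1 \<le> a" "a < n" "w (a + 1) < w a" using Sn_descent_exists[OF Suc(3)] Suc(2) by auto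
  have "len n (w \<circ> sg a) + 1 = len n w" using len_down[OF a(1,2)] a(3) by simp
  then have "k = len n (w \<circ> sg a)" using Suc(2) by simp
  moreover have "w \<circ> sg a \<in> Sn n" using Suc(3) a by (simp add: Sn_comp sg_Sn)
  ultimately obtain as where as: "set as \<subseteq> {1..<n}" "length as = len n (w \<circ> sg a)" "word_prod as = w \<circ> sg a"
    using Suc(1) by blast
  show ?case
    using as a \<open>len n (w \<circ> sg a) + 1 = len n w\<close>
    by (intro exI[of _ "as @ [a]"]) (auto simp: comp_assoc)
qed

lemma rword_spec:
  assumes "w \<in> Sn n"
  shows "set (rword n w) \<subseteq> {1..<n}" "length (rword n w) = len n w" "word_prod (rword n w) = w"
  using someI_ex[OF reduced_word_exists[OF assms]] unfolding rword_def by auto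

lemma rword_reduced: "w \<in> Sn n \<Longrightarrow> reduced n (rword n w)"
  using rword_spec unfolding reduced_def by simp

lemma rword_id[simp]: "rword n id = []"
  using rword_spec(2)[OF Sn_id, of n] by simp

section \<open>Bruhat order\<close>

lemma transpose_Sn: "1 \<le> i \<Longrightarrow> i < j \<Longrightarrow> j \<le> n \<Longrightarrow> Transposition.transpose i j \<in> Sn n"
  unfolding Sn_def by (simp add: permutes_swap_id)

lemma bruhat_stepI:
  "w \<in> Sn n \<Longrightarrow> 1 \<le> i \<Longrightarrow> i < j \<Longrightarrow> j \<le> n \<Longrightarrow> len n w < len n (w \<circ> Transposition.transpose i j)
   \<Longrightarrow> (w, w \<circ> Transposition.transpose i j) \<in> bruhat_step n"
  unfolding bruhat_step_def by blast

lemma bruhat_step_D: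
  assumes "(y, x) \<in> bruhat_step n"
  shows "y \<in> Sn n" "x \<in> Sn n" "len n y < len n x"
proof -
  obtain i j where "x = y \<circ> Transposition.transpose i j" "y \<in> Sn n" "1 \<le> i" "i < j" "j \<le> n"
      "len n y < len n (y \<circ> Transposition.transpose i j)"
    using assms unfolding bruhat_step_def by blast
  then show "y \<in> Sn n" "x \<in> Sn n" "len n y < len n x" using transpose_Sn Sn_comp by auto
qed

lemma bruhat_lt_D:
  assumes "bruhat_lt n y x"
  shows "y \<in> Sn n" "x \<in> Sn n" "len n y < len n x"
proof -
  have "(y, x) \<in> (bruhat_step n)\<^sup>+" using assms by (simp add: bruhat_lt_def)
  then have "y \<in> Sn n \<and> x \<in> Sn n \<and> len n y < len n x"
    by (induction rule: trancl_induct) (auto dest: bruhat_step_D)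
  then show "y \<in> Sn n" "x \<in> Sn n" "len n y < len n x" by auto
qed

lemma bruhat_lt_irrefl[simp]: "\<not> bruhat_lt n x x"
  using bruhat_lt_D(3) by blast

lemma bruhat_lt_trans: "bruhat_lt n x y \<Longrightarrow> bruhat_lt n y z \<Longrightarrow> bruhat_lt n x z"
  unfolding bruhat_lt_def by simp

lemma bruhat_step_sg:
  assumes "w \<in> Sn n" "1 \<le> a" "a < n" "w a < w (a + 1)"
  shows "(w, w \<circ> sg a) \<in> bruhat_step n"
  using bruhat_stepI[OF assms(1,2) _ _ , of "a+1"] assms len_up[OF assms(2,3,4)] unfolding sg_def by simp

lemma bruhat_lt_sg:
  assumes "w \<in> Sn n" "1 \<le> a" "a < n" "w a < w (a + 1)"
  shows "bruhat_lt n w (w \<circ> sg a)"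
  using bruhat_step_sg[OF assms] unfolding bruhat_lt_def by simp

lemma sg_conj_transpose:
  "sg a \<circ> Transposition.transpose i j \<circ> sg a = Transposition.transpose (sg a i) (sg a j)"
proof -
  have b: "bij (sg a)" by (simp add: sg_def)
  have "Transposition.transpose (sg a i) (sg a j) \<circ> sg a = sg a \<circ> Transposition.transpose i j"
    using transpose_comp_eq[OF b, of "sg a i" "sg a j"] by simp
  then show ?thesis by (metis comp_assoc comp_id sg_sg)
qed

lemma bruhat_step_comp_sg:
  assumes st: "(y, y') \<in> bruhat_step n" and a: "1 \<le> a" "a < n"
  shows "y \<circ> sg a = y' \<or> (y \<circ> sg a, y' \<circ> sg a) \<in> bruhat_step n"
proof -
  obtain i j where ij: "y' = y \<circ> Transposition.transpose i j" "y \<in> Sn n" "1 \<le> i" "i < j" "j \<le> n"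
      "len n (y \<circ> Transposition.transpose i j) > len n y"
    using st unfolding bruhat_step_def by auto
  let ?t = "Transposition.transpose i j"
  have yij: "y i < y j"
  proof (rule ccontr)
    assume "\<not> y i < y j"
    moreover have "y i \<noteq> y j" using Sn_inj[OF ij(2)] ij(4) by (metis inj_eq less_irrefl)
    ultimately have "(y \<circ> ?t) i < (y \<circ> ?t) j" by simp
    then have "len n (y \<circ> ?t) < len n (y \<circ> ?t \<circ> ?t)" by (rule len_transp_up[OF ij(3,4,5)])
    then show False using ij(6) by (simp add: comp_assoc)
  qed
  show ?thesis
  proof (cases "sg a i < sg a j")
    case True
    have eq: "y' \<circ> sg a = (y \<circ> sg a) \<circ> Transposition.transpose (sg a i) (sg a j)"
      using ij(1) sg_conj_transpose[of a i j] by (metis comp_assoc sg_comp_sg)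
    have r: "1 \<le> sg a i" "sg a j \<le> n" using sg_range[OF a, of i] sg_range[OF a, of j] ij by auto
    have "(y \<circ> sg a) (sg a i) < (y \<circ> sg a) (sg a j)" using yij by simp
    then have "len n (y \<circ> sg a) < len n (y \<circ> sg a \<circ> Transposition.transpose (sg a i) (sg a j))"
      using len_transp_up[OF r(1) True r(2)] by blast
    moreover have "y \<circ> sg a \<in> Sn n" using ij(2) a by (simp add: Sn_comp sg_Sn)
    ultimately have "(y \<circ> sg a, y' \<circ> sg a) \<in> bruhat_step n"
      unfolding eq using bruhat_stepI[OF _ r(1) True r(2)] by blast
    then show ?thesis by simp
  next
    case False
    then have "(i, j) = (a, a + 1)" using sg_order[OF ij(4)] by blast
    then have "?t = sg a" by (simp add: sg_def)
    then show ?thesis using ij(1) by simp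
  qed
qed

definition bruhat_le :: "nat \<Rightarrow> (nat \<Rightarrow> nat) \<Rightarrow> (nat \<Rightarrow> nat) \<Rightarrow> bool" where
  "bruhat_le n y x \<longleftrightarrow> y = x \<or> bruhat_lt n y x"

lemma bruhat_le_comp_sg:
  assumes yw: "bruhat_le n y w" and w: "w \<in> Sn n" and a: "1 \<le> a" "a < n"
    and up: "w a < w (a + 1)"
  shows "bruhat_le n (y \<circ> sg a) (w \<circ> sg a)"
proof -
  have wws: "bruhat_lt n w (w \<circ> sg a)" by (rule bruhat_lt_sg[OF w a up])
  show ?thesis
  proof (cases "y = w")
    case True then show ?thesis by (simp add: bruhat_le_def)
  next
    case False
    then have "(y, w) \<in> (bruhat_step n)\<^sup>+" using yw by (simp add: bruhat_le_def bruhat_lt_def)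
    then show ?thesis
    proof (induction rule: converse_trancl_induct)
      case (base y)
      from bruhat_step_comp_sg[OF base a] show ?case
      proof
        assume "y \<circ> sg a = w" then show ?thesis using wws unfolding bruhat_le_def by blast
      next
        assume "(y \<circ> sg a, w \<circ> sg a) \<in> bruhat_step n"
        then show ?thesis unfolding bruhat_le_def bruhat_lt_def by blast
      qed
    next
      case (step y y')
      from bruhat_step_comp_sg[OF step(1) a] show ?case
      proof
        assume "y \<circ> sg a = y'"
        then have "bruhat_lt n (y \<circ> sg a) w" using step(2) by (simp add: bruhat_lt_def)
        then show ?thesis unfolding bruhat_le_def using bruhat_lt_trans[OF _ wws] by blast
      next
        assume "(y \<circ> sg a, y' \<circ> sg a) \<in> bruhat_step n"
        then have "bruhat_lt n (y \<circ> sg a) (y' \<circ> sg a)" by (simp add: bruhat_lt_def)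
        note yy = this
        from step(3)[unfolded bruhat_le_def] show ?thesis
        proof
          assume e: "y' \<circ> sg a = w \<circ> sg a" show ?thesis using yy[unfolded e] unfolding bruhat_le_def by blast
        next
          assume "bruhat_lt n (y' \<circ> sg a) (w \<circ> sg a)" then show ?thesis using yy bruhat_lt_trans unfolding bruhat_le_def by blast
        qed
      qed
    qed
  qed
qed


section \<open>Elements of the Hecke algebra and linear maps\<close>

lemma sum_fun_apply: "(\<Sum>w\<in>A. f w) x = (\<Sum>w\<in>A. f w x)"
  by (induction A rule: infinite_finite_induct) auto

lemma hsum_eq: "hsum n f = (\<Sum>w\<in>Sn n. f w)"
  unfolding hsum_def by (rule ext) (simp add: sum_fun_apply)

lemma hzero_eq: "hzero = 0"
  unfolding hzero_def by (rule ext) simp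

lemma hscale_apply[simp]: "hscale c h w = c * h w"
  by (simp add: hscale_def)

lemma hscale_add: "hscale c (h + g) = hscale c h + hscale c g"
  by (rule ext) (simp add: distrib_left)
lemma hscale_add2: "hscale (c + d) h = hscale c h + hscale d h"
  by (rule ext) (simp add: distrib_right)
lemma hscale_hscale[simp]: "hscale c (hscale d h) = hscale (c * d) h"
  by (rule ext) (simp add: mult.assoc)
lemma hscale_one[simp]: "hscale 1 h = h"
  by (rule ext) simp
lemma hscale_zero[simp]: "hscale 0 h = 0"
  by (rule ext) simp
lemma hscale_sum: "hscale c (\<Sum>w\<in>A. f w) = (\<Sum>w\<in>A. hscale c (f w))"
  by (rule ext) (simp add: sum_fun_apply sum_distrib_left)
lemma hscale_sum2: "hscale (\<Sum>w\<in>A. f w) h = (\<Sum>w\<in>A. hscale (f w) h)"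
  by (rule ext) (simp add: sum_fun_apply sum_distrib_right)

definition hlinear :: "(hecke \<Rightarrow> hecke) \<Rightarrow> bool" where
  "hlinear F \<longleftrightarrow> (\<forall>h g. F (h + g) = F h + F g) \<and> (\<forall>c h. F (hscale c h) = hscale c (F h))"

lemma hlinearI: "(\<And>h g. F (h + g) = F h + F g) \<Longrightarrow> (\<And>c h. F (hscale c h) = hscale c (F h)) \<Longrightarrow> hlinear F"
  unfolding hlinear_def by blast

lemma hlinear_add: "hlinear F \<Longrightarrow> F (h + g) = F h + F g"
  unfolding hlinear_def by blast
lemma hlinear_scale: "hlinear F \<Longrightarrow> F (hscale c h) = hscale c (F h)"
  unfolding hlinear_def by blast
lemma hlinear_zero: "hlinear F \<Longrightarrow> F 0 = 0"
  using hlinear_scale[of F 0 0] by simp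
lemma hlinear_sum: "hlinear F \<Longrightarrow> F (\<Sum>w\<in>A. f w) = (\<Sum>w\<in>A. F (f w))"
  by (induction A rule: infinite_finite_induct) (auto simp: hlinear_zero hlinear_add)
lemma hlinear_diff: "hlinear F \<Longrightarrow> F (h - g) = F h - F g"
  by (metis add_diff_cancel_right' diff_add_cancel hlinear_add)
lemma hlinear_comp: "hlinear F \<Longrightarrow> hlinear G \<Longrightarrow> hlinear (F \<circ> G)"
  unfolding hlinear_def by simp
lemma hlinear_id: "hlinear (\<lambda>h. h)"
  unfolding hlinear_def by simp

lemma Hn_add: "h \<in> Hn n \<Longrightarrow> g \<in> Hn n \<Longrightarrow> h + g \<in> Hn n"
  unfolding Hn_def by simp
lemma Hn_diff: "h \<in> Hn n \<Longrightarrow> g \<in> Hn n \<Longrightarrow> h - g \<in> Hn n"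
  unfolding Hn_def by simp
lemma Hn_scale: "h \<in> Hn n \<Longrightarrow> hscale c h \<in> Hn n"
  unfolding Hn_def by simp
lemma Hn_zero[simp]: "0 \<in> Hn n"
  unfolding Hn_def by simp
lemma Hn_sum: "(\<And>w. w \<in> A \<Longrightarrow> f w \<in> Hn n) \<Longrightarrow> (\<Sum>w\<in>A. f w) \<in> Hn n"
  by (induction A rule: infinite_finite_induct) (auto intro: Hn_add)
lemma Hn_Tb: "u \<in> Sn n \<Longrightarrow> Tb u \<in> Hn n"
  unfolding Hn_def Tb_def by auto
lemma HnD: "h \<in> Hn n \<Longrightarrow> w \<notin> Sn n \<Longrightarrow> h w = 0"
  unfolding Hn_def by blast

lemma Tb_apply: "Tb x w = (if w = x then 1 else 0)"
  by (simp add: Tb_def)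

lemma Tb_expansion: "h \<in> Hn n \<Longrightarrow> h = (\<Sum>w\<in>Sn n. hscale (h w) (Tb w))"
proof (rule ext)
  fix u assume h: "h \<in> Hn n"
  have "(\<Sum>w\<in>Sn n. hscale (h w) (Tb w)) u = (\<Sum>w\<in>Sn n. h w * (if u = w then 1 else 0))"
    by (simp add: sum_fun_apply Tb_apply)
  also have "\<dots> = (\<Sum>w\<in>Sn n. if u = w then h w else 0)"
    by (rule sum.cong) auto
  also have "\<dots> = h u" using HnD[OF h, of u] by (cases "u \<in> Sn n") simp_all
  finally show "h u = (\<Sum>w\<in>Sn n. hscale (h w) (Tb w)) u" by simp
qed

lemma hlinear_eq_on_Hn:
  assumes "hlinear F" "hlinear G" "\<And>w. w \<in> Sn n \<Longrightarrow> F (Tb w) = G (Tb w)" "h \<in> Hn n"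
  shows "F h = G h"
proof -
  have "F h = F (\<Sum>w\<in>Sn n. hscale (h w) (Tb w))" using Tb_expansion[OF assms(4)] by simp
  also have "\<dots> = (\<Sum>w\<in>Sn n. hscale (h w) (F (Tb w)))" by (simp add: hlinear_sum[OF assms(1)] hlinear_scale[OF assms(1)])
  also have "\<dots> = (\<Sum>w\<in>Sn n. hscale (h w) (G (Tb w)))" using assms(3) by simp
  also have "\<dots> = G (\<Sum>w\<in>Sn n. hscale (h w) (Tb w))" by (simp add: hlinear_sum[OF assms(2)] hlinear_scale[OF assms(2)])
  finally show ?thesis using Tb_expansion[OF assms(4)] by simp
qed

section \<open>Right and left multiplication by generators\<close>

definition lmult_s :: "nat \<Rightarrow> nat \<Rightarrow> hecke \<Rightarrow> hecke" where
  "lmult_s n a h = (\<lambda>u. h (sg a \<circ> u)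
       + (if len n (sg a \<circ> u) < len n u then (vinv - vv) * h u else 0))"

lemma hlinear_mult_s: "hlinear (\<lambda>h. mult_s n h a)"
  by (rule hlinearI; rule ext) (simp_all add: mult_s_def algebra_simps)

lemma hlinear_lmult_s: "hlinear (lmult_s n a)"
  by (rule hlinearI; rule ext) (simp_all add: lmult_s_def algebra_simps)

lemma hlinear_mult_sinv: "hlinear (\<lambda>h. mult_sinv n h a)"
  by (rule hlinearI; rule ext) (simp_all add: mult_sinv_def mult_s_def algebra_simps)

lemma not_Sn_comp: "u \<notin> Sn n \<Longrightarrow> x \<in> Sn n \<Longrightarrow> u \<circ> x \<notin> Sn n"
proof
  assume "u \<notin> Sn n" "x \<in> Sn n" "u \<circ> x \<in> Sn n"
  then have "(u \<circ> x) \<circ> inv x \<in> Sn n" by auto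
  then show False using \<open>u \<notin> Sn n\<close> \<open>x \<in> Sn n\<close> by (simp add: comp_assoc Sn_inv_comp)
qed

lemma not_Sn_comp2: "u \<notin> Sn n \<Longrightarrow> x \<in> Sn n \<Longrightarrow> x \<circ> u \<notin> Sn n"
proof
  assume "u \<notin> Sn n" "x \<in> Sn n" "x \<circ> u \<in> Sn n"
  then have "inv x \<circ> (x \<circ> u) \<in> Sn n" by auto
  then show False using \<open>u \<notin> Sn n\<close> \<open>x \<in> Sn n\<close> by (simp add: comp_assoc[symmetric] Sn_inv_comp)
qed

lemma Hn_mult_s: "h \<in> Hn n \<Longrightarrow> 1 \<le> a \<Longrightarrow> a < n \<Longrightarrow> mult_s n h a \<in> Hn n"
  unfolding Hn_def mult_s_def using not_Sn_comp[OF _ sg_Sn] by simp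

lemma Hn_lmult_s: "h \<in> Hn n \<Longrightarrow> 1 \<le> a \<Longrightarrow> a < n \<Longrightarrow> lmult_s n a h \<in> Hn n"
  unfolding Hn_def lmult_s_def using not_Sn_comp2[OF _ sg_Sn] by simp

lemma Hn_mult_sinv: "h \<in> Hn n \<Longrightarrow> 1 \<le> a \<Longrightarrow> a < n \<Longrightarrow> mult_sinv n h a \<in> Hn n"
  unfolding mult_sinv_def using Hn_mult_s[of h n a] by (simp add: Hn_def)

lemma comp_sg_eq_iff: "x \<circ> sg a = u \<longleftrightarrow> x = u \<circ> sg a"
proof
  assume "x \<circ> sg a = u" then have "x \<circ> sg a \<circ> sg a = u \<circ> sg a" by simp
  then show "x = u \<circ> sg a" by (simp only: sg_comp_sg)
next
  assume "x = u \<circ> sg a" then show "x \<circ> sg a = u" by (simp only: sg_comp_sg)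
qed

lemma sg_sg_comp[simp]: "sg a \<circ> (sg a \<circ> u) = u"
  by (simp add: comp_assoc[symmetric])

lemma sg_comp_eq_iff: "sg a \<circ> x = u \<longleftrightarrow> x = sg a \<circ> u"
proof
  assume "sg a \<circ> x = u" then have "sg a \<circ> (sg a \<circ> x) = sg a \<circ> u" by simp
  then show "x = sg a \<circ> u" by (simp only: sg_sg_comp)
next
  assume "x = sg a \<circ> u" then show "sg a \<circ> x = u" by (simp only: sg_sg_comp)
qed

lemma mult_s_Tb_up:
  assumes "u \<in> Sn n" "1 \<le> a" "a < n" "u a < u (a + 1)"
  shows "mult_s n (Tb u) a = Tb (u \<circ> sg a)"
proof (rule ext)
  fix x
  have l: "len n (u \<circ> sg a) = len n u + 1" using len_up[OF assms(2,3,4)] .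
  show "mult_s n (Tb u) a x = Tb (u \<circ> sg a) x"
    unfolding mult_s_def Tb_apply comp_sg_eq_iff using l by auto
qed

lemma mult_s_Tb_down:
  assumes "u \<in> Sn n" "1 \<le> a" "a < n" "u (a + 1) < u a"
  shows "mult_s n (Tb u) a = Tb (u \<circ> sg a) + hscale (vinv - vv) (Tb u)"
proof (rule ext)
  fix x
  have l: "len n (u \<circ> sg a) + 1 = len n u" using len_down[OF assms(2,3,4)] .
  show "mult_s n (Tb u) a x = (Tb (u \<circ> sg a) + hscale (vinv - vv) (Tb u)) x"
    unfolding mult_s_def Tb_apply comp_sg_eq_iff using l by auto
qed

lemma left_descent_iff:
  assumes "u \<in> Sn n" "1 \<le> a" "a < n"
  shows "len n (sg a \<circ> u) < len n u \<longleftrightarrow> inv u (a + 1) < inv u a"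
proof -
  have "len n (sg a \<circ> u) = len n (inv u \<circ> sg a)"
    using len_inv[of "sg a \<circ> u" n] Sn_inv_comp_distrib[OF sg_Sn[OF assms(2,3)] assms(1)] assms
    by (simp add: Sn_comp sg_Sn)
  moreover have "len n u = len n (inv u)" using len_inv[OF assms(1)] by simp
  ultimately show ?thesis using len_sg_less_iff[OF Sn_inv[OF assms(1)] assms(2,3)] by simp
qed

lemma lmult_s_Tb_up:
  assumes "u \<in> Sn n" "1 \<le> a" "a < n" "len n u < len n (sg a \<circ> u)"
  shows "lmult_s n a (Tb u) = Tb (sg a \<circ> u)"
proof (rule ext)
  fix x
  show "lmult_s n a (Tb u) x = Tb (sg a \<circ> u) x"
    unfolding lmult_s_def Tb_apply sg_comp_eq_iff using assms(4) by auto
qed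


lemma sg_less_iff:
  assumes "p \<noteq> q" "\<not> ({p, q} = {a, a + 1})"
  shows "sg a q < sg a p \<longleftrightarrow> q < p"
proof -
  have "p < q \<Longrightarrow> (p, q) \<noteq> (a, a + 1)" using assms(2) by auto
  moreover have "q < p \<Longrightarrow> (q, p) \<noteq> (a, a + 1)" using assms(2) by auto
  ultimately show ?thesis using sg_order[of p q a] sg_order[of q p a] assms(1)
    by (meson linorder_neqE_nat order.asym)
qed

lemma sg_comp_eq_comp_sg:
  assumes u: "u \<in> Sn n" and ab: "{u b, u (b + 1)} = {a, a + 1}"
  shows "sg a \<circ> u = u \<circ> sg b"
proof (rule ext)
  fix k
  show "(sg a \<circ> u) k = (u \<circ> sg b) k"
  proof (cases "k = b \<or> k = b + 1")
    case True
    have "(u b = a \<and> u (b+1) = a+1) \<or> (u b = a+1 \<and> u (b+1) = a)"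
      using ab by (auto simp: doubleton_eq_iff)
    then show ?thesis using True by (auto simp: sg_apply)
  next
    case False
    then have "u k \<noteq> u b" "u k \<noteq> u (b + 1)" using Sn_inj[OF u] by (auto simp: inj_eq)
    then have "u k \<noteq> a" "u k \<noteq> a + 1" using ab by (auto simp: doubleton_eq_iff)
    then show ?thesis using False by (simp add: sg_apply)
  qed
qed

lemma descent_comp_sg_iff:
  assumes u: "u \<in> Sn n" and a: "1 \<le> a" "a < n" and b: "1 \<le> b" "b < n"
    and ne: "sg a \<circ> u \<noteq> u \<circ> sg b"
  shows "(len n ((sg a \<circ> u) \<circ> sg b) < len n (sg a \<circ> u) \<longleftrightarrow> len n (u \<circ> sg b) < len n u)"
    and "(len n (sg a \<circ> (u \<circ> sg b)) < len n (u \<circ> sg b) \<longleftrightarrow> len n (sg a \<circ> u) < len n u)"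
proof -
  have su: "sg a \<circ> u \<in> Sn n" using u a by (simp add: Sn_comp sg_Sn)
  have ut: "u \<circ> sg b \<in> Sn n" using u b by (simp add: Sn_comp sg_Sn)
  have nab: "\<not> ({u b, u (b + 1)} = {a, a + 1})" using sg_comp_eq_comp_sg[OF u] ne by blast
  have pq: "u b \<noteq> u (b + 1)" using Sn_inj[OF u] by (simp add: inj_eq)
  show "(len n ((sg a \<circ> u) \<circ> sg b) < len n (sg a \<circ> u) \<longleftrightarrow> len n (u \<circ> sg b) < len n u)"
    unfolding len_sg_less_iff[OF su b] len_sg_less_iff[OF u b]
    using sg_less_iff[OF pq nab] by simp
  have iu: "inv u \<in> Sn n" using u by auto
  have PQ: "inv u a \<noteq> inv u (a + 1)" using Sn_inj[OF iu] by (simp add: inj_eq)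
  have nPQ: "\<not> ({inv u a, inv u (a + 1)} = {b, b + 1})"
  proof
    assume "{inv u a, inv u (a + 1)} = {b, b + 1}"
    then have d: "(inv u a = b \<and> inv u (a+1) = b+1) \<or> (inv u a = b+1 \<and> inv u (a+1) = b)"
      by (auto simp: doubleton_eq_iff)
    have "u (inv u a) = a" "u (inv u (a+1)) = a+1" using u by simp_all
    with d have "(u b = a \<and> u (b+1) = a+1) \<or> (u b = a+1 \<and> u (b+1) = a)" by auto
    then have "{u b, u (b + 1)} = {a, a + 1}" by auto
    then show False using nab by blast
  qed
  have invut: "inv (u \<circ> sg b) = sg b \<circ> inv u"
    using Sn_inv_comp_distrib[OF u sg_Sn[OF b]] by simp
  show "(len n (sg a \<circ> (u \<circ> sg b)) < len n (u \<circ> sg b) \<longleftrightarrow> len n (sg a \<circ> u) < len n u)"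
    unfolding left_descent_iff[OF ut a] left_descent_iff[OF u a] invut
    using sg_less_iff[OF PQ nPQ] by simp
qed

lemma lmult_mult_s_comm:
  assumes h: "h \<in> Hn n" and a: "1 \<le> a" "a < n" and b: "1 \<le> b" "b < n"
  shows "lmult_s n a (mult_s n h b) = mult_s n (lmult_s n a h) b"
proof (rule ext)
  fix u
  show "lmult_s n a (mult_s n h b) u = mult_s n (lmult_s n a h) b u"
  proof (cases "u \<in> Sn n")
    case False
    have "sg a \<circ> u \<notin> Sn n" "u \<circ> sg b \<notin> Sn n"
      using not_Sn_comp[OF False sg_Sn[OF b]] not_Sn_comp2[OF False sg_Sn[OF a]] by auto
    then show ?thesis using False HnD[OF Hn_mult_s[OF h b]] HnD[OF Hn_lmult_s[OF h a]]
      unfolding lmult_s_def mult_s_def by simp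
  next
    case u: True
    define s where "s = sg a"
    define t where "t = sg b"
    define c where "c = vinv - vv"
    have e1: "(s \<circ> u) \<circ> t = s \<circ> (u \<circ> t)" by (simp add: comp_assoc)
    have L: "lmult_s n a (mult_s n h b) u = h (s \<circ> (u \<circ> t))
       + (if len n ((s \<circ> u) \<circ> t) < len n (s \<circ> u) then c * h (s \<circ> u) else 0)
       + (if len n (s \<circ> u) < len n u then c * (h (u \<circ> t)
          + (if len n (u \<circ> t) < len n u then c * h u else 0)) else 0)"
      unfolding lmult_s_def mult_s_def s_def t_def c_def by (simp add: comp_assoc)
    have R: "mult_s n (lmult_s n a h) b u = h (s \<circ> (u \<circ> t))
       + (if len n (s \<circ> (u \<circ> t)) < len n (u \<circ> t) then c * h (u \<circ> t) else 0)
       + (if len n (u \<circ> t) < len n u then c * (h (s \<circ> u)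
          + (if len n (s \<circ> u) < len n u then c * h u else 0)) else 0)"
      unfolding lmult_s_def mult_s_def s_def t_def c_def by simp
    show ?thesis
    proof (cases "s \<circ> u = u \<circ> t")
      case True
      have e2: "(s \<circ> u) \<circ> t = u" using True by (simp add: t_def comp_assoc)
      have e3: "s \<circ> (u \<circ> t) = u" using True e2 e1 by simp
      show ?thesis unfolding L R e2 e3 using True
        by (simp add: algebra_simps)
    next
      case False
      note cc = descent_comp_sg_iff[OF u a b False[unfolded s_def t_def]]
      show ?thesis unfolding L R using cc unfolding s_def t_def
        by (simp add: algebra_simps)
    qed
  qed
qed

section \<open>Multiplication by words in the generators\<close>

definition mult_word :: "nat \<Rightarrow> hecke \<Rightarrow> nat list \<Rightarrow> hecke" where
  "mult_word n h as = foldl (mult_s n) h as"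

definition lmult_word :: "nat \<Rightarrow> nat list \<Rightarrow> hecke \<Rightarrow> hecke" where
  "lmult_word n as h = foldr (lmult_s n) as h"

lemma mult_word_nil[simp]: "mult_word n h [] = h" by (simp add: mult_word_def)
lemma mult_word_cons[simp]: "mult_word n h (a # as) = mult_word n (mult_s n h a) as" by (simp add: mult_word_def)
lemma mult_word_append[simp]: "mult_word n h (as @ bs) = mult_word n (mult_word n h as) bs" by (simp add: mult_word_def)
lemma lmult_word_nil[simp]: "lmult_word n [] h = h" by (simp add: lmult_word_def)
lemma lmult_word_cons[simp]: "lmult_word n (a # as) h = lmult_s n a (lmult_word n as h)" by (simp add: lmult_word_def)

lemma mult_T_mult_word: "mult_T n h w = mult_word n h (rword n w)"
  by (simp add: mult_T_def mult_word_def)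

lemma hlinear_mult_word: "hlinear (\<lambda>h. mult_word n h as)"
proof (induction as)
  case Nil then show ?case by (simp add: hlinear_id)
next
  case (Cons a as)
  have "(\<lambda>h. mult_word n h (a # as)) = (\<lambda>h. mult_word n h as) \<circ> (\<lambda>h. mult_s n h a)" by (simp add: fun_eq_iff)
  then show ?case using hlinear_comp[OF Cons hlinear_mult_s] by simp
qed

lemma hlinear_lmult_word: "hlinear (lmult_word n as)"
proof (induction as)
  case Nil then show ?case by (simp add: hlinear_id[unfolded id_def[symmetric]] hlinear_def)
next
  case (Cons a as)
  have "hlinear (lmult_s n a \<circ> lmult_word n as)" by (rule hlinear_comp[OF hlinear_lmult_s Cons.IH])
  moreover have "lmult_word n (a # as) = lmult_s n a \<circ> lmult_word n as" by (rule ext) simp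
  ultimately show ?case by (simp only:)
qed

lemma Hn_mult_word: "h \<in> Hn n \<Longrightarrow> set as \<subseteq> {1..<n} \<Longrightarrow> mult_word n h as \<in> Hn n"
proof (induction as arbitrary: h)
  case (Cons a as)
  have "mult_s n h a \<in> Hn n" using Cons.prems by (intro Hn_mult_s) auto
  then show ?case using Cons.IH Cons.prems by simp
qed simp

lemma Hn_lmult_word: "h \<in> Hn n \<Longrightarrow> set as \<subseteq> {1..<n} \<Longrightarrow> lmult_word n as h \<in> Hn n"
  by (induction as) (auto intro: Hn_lmult_s)

lemma lmult_mult_word_comm:
  "h \<in> Hn n \<Longrightarrow> 1 \<le> a \<Longrightarrow> a < n \<Longrightarrow> set bs \<subseteq> {1..<n} \<Longrightarrow>
   lmult_s n a (mult_word n h bs) = mult_word n (lmult_s n a h) bs"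
proof (induction bs arbitrary: h)
  case Nil then show ?case by simp
next
  case (Cons b bs)
  have "lmult_s n a (mult_word n h (b # bs)) = lmult_s n a (mult_word n (mult_s n h b) bs)" by simp
  also have "\<dots> = mult_word n (lmult_s n a (mult_s n h b)) bs"
    using Cons by (intro Cons.IH) (auto intro: Hn_mult_s)
  also have "\<dots> = mult_word n (mult_s n (lmult_s n a h) b) bs"
    using Cons by (subst lmult_mult_s_comm) auto
  finally show ?case by simp
qed

lemma lmult_word_mult_word_comm:
  "h \<in> Hn n \<Longrightarrow> set as \<subseteq> {1..<n} \<Longrightarrow> set bs \<subseteq> {1..<n} \<Longrightarrow>
   lmult_word n as (mult_word n h bs) = mult_word n (lmult_word n as h) bs"
proof (induction as)
  case Nil then show ?case by simp
next
  case (Cons a as)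
  then have "lmult_word n (a # as) (mult_word n h bs) = lmult_s n a (mult_word n (lmult_word n as h) bs)" by simp
  also have "\<dots> = mult_word n (lmult_s n a (lmult_word n as h)) bs"
  proof (rule lmult_mult_word_comm)
    show "lmult_word n as h \<in> Hn n" by (rule Hn_lmult_word) (use Cons.prems in auto)
  qed (use Cons.prems in auto)
  finally show ?case by simp
qed

lemma mult_word_Tb_reduced: "reduced n as \<Longrightarrow> mult_word n (Tb id) as = Tb (word_prod as)"
proof (induction as rule: rev_induct)
  case Nil then show ?case by simp
next
  case (snoc a as)
  note r = reduced_snoc_len[OF snoc.prems]
  have "reduced n as" using reduced_append1 snoc.prems by blast
  then have "mult_word n (Tb id) as = Tb (word_prod as)" by (rule snoc.IH)
  moreover have "word_prod as \<in> Sn n" using \<open>reduced n as\<close> by (simp add: reduced_def word_prod_Sn)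
  ultimately show ?case using mult_s_Tb_up[of "word_prod as" n a] r by (simp add: comp_def id_def)
qed

lemma lmult_word_Tb_reduced: "reduced n as \<Longrightarrow> lmult_word n as (Tb id) = Tb (word_prod as)"
proof (induction as)
  case Nil then show ?case by simp
next
  case (Cons a as)
  have r: "reduced n as" using reduced_append2[of n "[a]" as] Cons.prems by simp
  have a: "1 \<le> a" "a < n" using Cons.prems by (auto simp: reduced_def)
  have w: "word_prod as \<in> Sn n" using r by (simp add: reduced_def word_prod_Sn)
  have "len n (word_prod as) < len n (sg a \<circ> word_prod as)"
    using Cons.prems r by (simp add: reduced_def)
  then show ?case using Cons.IH[OF r] lmult_s_Tb_up[OF w a] by (simp add: comp_def id_def)
qed


section \<open>The Hecke algebra\<close>

lemma hmult_eq: "hmult n h g = (\<Sum>w\<in>Sn n. hscale (g w) (mult_word n h (rword n w)))"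
  unfolding hmult_def hsum_eq mult_T_mult_word ..

lemma hlinear_hmult_left: "hlinear (\<lambda>h. hmult n h g)"
proof (rule hlinearI)
  fix h1 h2
  show "hmult n (h1 + h2) g = hmult n h1 g + hmult n h2 g"
    unfolding hmult_eq hlinear_add[OF hlinear_mult_word] hscale_add by (simp add: sum.distrib)
next
  fix c h
  show "hmult n (hscale c h) g = hscale c (hmult n h g)"
    unfolding hmult_eq hlinear_scale[OF hlinear_mult_word] hscale_sum by (simp add: mult.commute)
qed

lemma hlinear_hmult_right: "hlinear (hmult n h)"
proof (rule hlinearI)
  fix g1 g2
  show "hmult n h (g1 + g2) = hmult n h g1 + hmult n h g2"
    unfolding hmult_eq by (simp add: hscale_add2 sum.distrib)
next
  fix c g
  show "hmult n h (hscale c g) = hscale c (hmult n h g)"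
    unfolding hmult_eq hscale_sum by simp
qed

lemma rword_set: "w \<in> Sn n \<Longrightarrow> set (rword n w) \<subseteq> {1..<n}"
  using rword_spec(1) .

lemma Hn_hmult: "h \<in> Hn n \<Longrightarrow> hmult n h g \<in> Hn n"
  unfolding hmult_eq by (intro Hn_sum Hn_scale Hn_mult_word rword_set)

lemma hmult_Tb: "w \<in> Sn n \<Longrightarrow> hmult n h (Tb w) = mult_word n h (rword n w)"
proof -
  assume w: "w \<in> Sn n"
  have "hmult n h (Tb w) = (\<Sum>x\<in>Sn n. if x = w then mult_word n h (rword n x) else 0)"
    unfolding hmult_eq by (rule sum.cong) (auto simp: Tb_apply)
  also have "\<dots> = mult_word n h (rword n w)" using w by simp
  finally show ?thesis .
qed

lemma lmult_word_expansion: "h \<in> Hn n \<Longrightarrow> h = (\<Sum>u\<in>Sn n. hscale (h u) (lmult_word n (rword n u) (Tb id)))"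
proof -
  assume h: "h \<in> Hn n"
  have "\<And>u. u \<in> Sn n \<Longrightarrow> lmult_word n (rword n u) (Tb id) = Tb u"
    using lmult_word_Tb_reduced rword_reduced rword_spec(3) by metis
  then show ?thesis using Tb_expansion[OF h] by (metis (no_types, lifting) sum.cong)
qed

(* Computing h g by left multiplications on g: together with the commutation of left and right
   multiplication by generators, this gives associativity. *)
lemma hmult_lmult_word:
  assumes h: "h \<in> Hn n" and g: "g \<in> Hn n"
  shows "hmult n h g = (\<Sum>u\<in>Sn n. hscale (h u) (lmult_word n (rword n u) g))"
proof -
  have RL: "mult_word n h (rword n w) = (\<Sum>u\<in>Sn n. hscale (h u) (lmult_word n (rword n u) (Tb w)))"
    if w: "w \<in> Sn n" for w
  proof -
    have "mult_word n h (rword n w) = mult_word n (\<Sum>u\<in>Sn n. hscale (h u) (lmult_word n (rword n u) (Tb id))) (rword n w)"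
      using lmult_word_expansion[OF h] by simp
    also have "\<dots> = (\<Sum>u\<in>Sn n. hscale (h u) (mult_word n (lmult_word n (rword n u) (Tb id)) (rword n w)))"
      by (simp add: hlinear_sum[OF hlinear_mult_word] hlinear_scale[OF hlinear_mult_word])
    also have "\<dots> = (\<Sum>u\<in>Sn n. hscale (h u) (lmult_word n (rword n u) (mult_word n (Tb id) (rword n w))))"
      by (rule sum.cong[OF refl]) (simp add: lmult_word_mult_word_comm[OF Hn_Tb[OF Sn_id] rword_set rword_set[OF w]])
    also have "\<dots> = (\<Sum>u\<in>Sn n. hscale (h u) (lmult_word n (rword n u) (Tb w)))"
      using mult_word_Tb_reduced[OF rword_reduced[OF w]] rword_spec(3)[OF w] by simp
    finally show ?thesis .
  qed
  have "hmult n h g = (\<Sum>w\<in>Sn n. hscale (g w) (\<Sum>u\<in>Sn n. hscale (h u) (lmult_word n (rword n u) (Tb w))))"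
    unfolding hmult_eq by (rule sum.cong[OF refl]) (simp add: RL)
  also have "\<dots> = (\<Sum>w\<in>Sn n. \<Sum>u\<in>Sn n. hscale (h u) (hscale (g w) (lmult_word n (rword n u) (Tb w))))"
    by (simp add: hscale_sum mult.commute)
  also have "\<dots> = (\<Sum>u\<in>Sn n. \<Sum>w\<in>Sn n. hscale (h u) (hscale (g w) (lmult_word n (rword n u) (Tb w))))"
    by (rule sum.swap)
  also have "\<dots> = (\<Sum>u\<in>Sn n. hscale (h u) (lmult_word n (rword n u) (\<Sum>w\<in>Sn n. hscale (g w) (Tb w))))"
    by (simp add: hscale_sum hlinear_sum[OF hlinear_lmult_word] hlinear_scale[OF hlinear_lmult_word])
  also have "\<dots> = (\<Sum>u\<in>Sn n. hscale (h u) (lmult_word n (rword n u) g))"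
    using Tb_expansion[OF g] by simp
  finally show ?thesis .
qed

lemma hmult_assoc:
  assumes h: "h \<in> Hn n" and g: "g \<in> Hn n" and k: "k \<in> Hn n"
  shows "hmult n (hmult n h g) k = hmult n h (hmult n g k)"
proof -
  have "hmult n (hmult n h g) k = (\<Sum>w\<in>Sn n. hscale (k w) (mult_word n (hmult n h g) (rword n w)))"
    by (rule hmult_eq)
  also have "\<dots> = (\<Sum>w\<in>Sn n. hscale (k w) (mult_word n (\<Sum>u\<in>Sn n. hscale (h u) (lmult_word n (rword n u) g)) (rword n w)))"
    by (simp only: hmult_lmult_word[OF h g])
  also have "\<dots> = (\<Sum>w\<in>Sn n. \<Sum>u\<in>Sn n. hscale (h u) (hscale (k w) (lmult_word n (rword n u) (mult_word n g (rword n w)))))"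
    by (rule sum.cong[OF refl])
       (auto simp: hlinear_sum[OF hlinear_mult_word] hlinear_scale[OF hlinear_mult_word] hscale_sum mult.commute
         lmult_word_mult_word_comm[OF g rword_set rword_set] intro!: sum.cong)
  also have "\<dots> = (\<Sum>u\<in>Sn n. \<Sum>w\<in>Sn n. hscale (h u) (hscale (k w) (lmult_word n (rword n u) (mult_word n g (rword n w)))))"
    by (rule sum.swap)
  also have "\<dots> = (\<Sum>u\<in>Sn n. hscale (h u) (lmult_word n (rword n u) (\<Sum>w\<in>Sn n. hscale (k w) (mult_word n g (rword n w)))))"
    by (simp add: hscale_sum hlinear_sum[OF hlinear_lmult_word] hlinear_scale[OF hlinear_lmult_word])
  also have "\<dots> = (\<Sum>u\<in>Sn n. hscale (h u) (lmult_word n (rword n u) (hmult n g k)))"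
    by (simp only: hmult_eq[of n g k])
  also have "\<dots> = hmult n h (hmult n g k)"
    by (rule hmult_lmult_word[OF h Hn_hmult[OF g], symmetric])
  finally show ?thesis .
qed

lemma hmult_one_right[simp]: "hmult n h (Tb id) = h"
  by (simp add: hmult_Tb)

lemma hmult_one_left: "g \<in> Hn n \<Longrightarrow> hmult n (Tb id) g = g"
proof -
  assume g: "g \<in> Hn n"
  have "hmult n (Tb id) g = (\<Sum>u\<in>Sn n. if u = id then lmult_word n (rword n u) g else 0)"
    unfolding hmult_lmult_word[OF Hn_Tb[OF Sn_id] g] by (rule sum.cong) (auto simp: Tb_apply)
  also have "\<dots> = g" by simp
  finally show ?thesis .
qed

lemma mult_word_hmult:
  assumes h: "h \<in> Hn n" and as: "set as \<subseteq> {1..<n}"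
  shows "mult_word n h as = hmult n h (mult_word n (Tb id) as)"
proof -
  have "hmult n h (mult_word n (Tb id) as) = (\<Sum>u\<in>Sn n. hscale (h u) (lmult_word n (rword n u) (mult_word n (Tb id) as)))"
    by (rule hmult_lmult_word[OF h Hn_mult_word[OF Hn_Tb[OF Sn_id] as]])
  also have "\<dots> = (\<Sum>u\<in>Sn n. hscale (h u) (mult_word n (lmult_word n (rword n u) (Tb id)) as))"
    by (rule sum.cong[OF refl]) (simp add: lmult_word_mult_word_comm[OF Hn_Tb[OF Sn_id] rword_set as])
  also have "\<dots> = mult_word n (\<Sum>u\<in>Sn n. hscale (h u) (lmult_word n (rword n u) (Tb id))) as"
    by (simp add: hlinear_sum[OF hlinear_mult_word] hlinear_scale[OF hlinear_mult_word])
  also have "\<dots> = mult_word n h as" using lmult_word_expansion[OF h] by simp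
  finally show ?thesis by simp
qed

lemma hmult_Tb_reduced:
  "h \<in> Hn n \<Longrightarrow> reduced n as \<Longrightarrow> hmult n h (Tb (word_prod as)) = mult_word n h as"
  using mult_word_hmult mult_word_Tb_reduced reduced_def by metis

lemma mult_s_hmult:
  assumes h: "h \<in> Hn n" and a: "1 \<le> a" "a < n"
  shows "mult_s n h a = hmult n h (Tb (sg a))"
proof -
  have "reduced n [a]" using a len_up[OF a, of id] by (simp add: reduced_def)
  then show ?thesis using hmult_Tb_reduced[OF h] by fastforce
qed


section \<open>Inverses of generators and the bar involution\<close>

lemma lam_id_nat[simp]: "(\<lambda>a::nat. a) = id"
  by (simp add: id_def)

definition Tsinv :: "nat \<Rightarrow> nat \<Rightarrow> hecke" where
  "Tsinv n a = mult_sinv n (Tb id) a"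

definition mult_inv_word :: "nat \<Rightarrow> hecke \<Rightarrow> nat list \<Rightarrow> hecke" where
  "mult_inv_word n h as = foldl (mult_sinv n) h as"

lemma mult_inv_word_nil[simp]: "mult_inv_word n h [] = h" by (simp add: mult_inv_word_def)
lemma mult_inv_word_cons[simp]: "mult_inv_word n h (a # as) = mult_inv_word n (mult_sinv n h a) as" by (simp add: mult_inv_word_def)
lemma mult_inv_word_append[simp]: "mult_inv_word n h (as @ bs) = mult_inv_word n (mult_inv_word n h as) bs" by (simp add: mult_inv_word_def)

lemma barT_mult_inv_word: "barT n w = mult_inv_word n (Tb id) (rword n w)"
  by (simp add: barT_def mult_inv_word_def)

lemma mult_sinv_eq: "mult_sinv n h a = mult_s n h a + hscale (vv - vinv) h"
  by (rule ext) (simp add: mult_sinv_def)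

lemma Hn_Tsinv: "1 \<le> a \<Longrightarrow> a < n \<Longrightarrow> Tsinv n a \<in> Hn n"
  unfolding Tsinv_def by (rule Hn_mult_sinv[OF Hn_Tb[OF Sn_id]])

lemma mult_s_one: "1 \<le> a \<Longrightarrow> a < n \<Longrightarrow> mult_s n (Tb id) a = Tb (sg a)"
  using mult_s_Tb_up[of id n a] by simp

lemma Tsinv_eq: "1 \<le> a \<Longrightarrow> a < n \<Longrightarrow> Tsinv n a = Tb (sg a) + hscale (vv - vinv) (Tb id)"
  unfolding Tsinv_def mult_sinv_eq by (simp add: mult_s_one)

lemma mult_s_Tb_sg_self: "1 \<le> a \<Longrightarrow> a < n \<Longrightarrow> mult_s n (Tb (sg a)) a = Tb id + hscale (vinv - vv) (Tb (sg a))"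
  using mult_s_Tb_down[of "sg a" n a] by (simp add: sg_Sn)

lemma mult_sinv_hmult:
  assumes h: "h \<in> Hn n" and a: "1 \<le> a" "a < n"
  shows "mult_sinv n h a = hmult n h (Tsinv n a)"
proof -
  have "mult_sinv n h a = hmult n h (Tb (sg a)) + hscale (vv - vinv) (hmult n h (Tb id))"
    unfolding mult_sinv_eq mult_s_hmult[OF h a] by simp
  also have "\<dots> = hmult n h (Tsinv n a)"
    unfolding Tsinv_eq[OF a] hlinear_add[OF hlinear_hmult_right] hlinear_scale[OF hlinear_hmult_right] ..
  finally show ?thesis .
qed

lemma hscale_opposite_cancel: "hscale (vinv - vv) X + hscale (vv - vinv) X = 0"
  by (rule ext) (simp add: algebra_simps)

lemma Tsinv_Ts: assumes a: "1 \<le> a" "a < n"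
  shows "hmult n (Tsinv n a) (Tb (sg a)) = Tb id"
proof -
  have "hmult n (Tsinv n a) (Tb (sg a)) = mult_s n (Tsinv n a) a"
    using mult_s_hmult[OF Hn_Tsinv[OF a] a] by simp
  also have "\<dots> = mult_s n (Tb (sg a)) a + hscale (vv - vinv) (mult_s n (Tb id) a)"
    unfolding Tsinv_eq[OF a] hlinear_add[OF hlinear_mult_s] hlinear_scale[OF hlinear_mult_s] ..
  also have "\<dots> = Tb id + (hscale (vinv - vv) (Tb (sg a)) + hscale (vv - vinv) (Tb (sg a)))"
    unfolding mult_s_Tb_sg_self[OF a] mult_s_one[OF a] by (simp add: add.assoc)
  finally show ?thesis by (simp only: hscale_opposite_cancel add_0_right)
qed

lemma Ts_Tsinv: assumes a: "1 \<le> a" "a < n"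
  shows "hmult n (Tb (sg a)) (Tsinv n a) = Tb id"
proof -
  have "hmult n (Tb (sg a)) (Tsinv n a) = mult_sinv n (Tb (sg a)) a"
    using mult_sinv_hmult[OF Hn_Tb[OF sg_Sn[OF a]] a] by simp
  also have "\<dots> = Tb id + (hscale (vinv - vv) (Tb (sg a)) + hscale (vv - vinv) (Tb (sg a)))"
    unfolding mult_sinv_eq mult_s_Tb_sg_self[OF a] by (simp add: add.assoc)
  finally show ?thesis by (simp only: hscale_opposite_cancel add_0_right)
qed

lemma Tsinv_Tsinv: assumes a: "1 \<le> a" "a < n"
  shows "hmult n (Tsinv n a) (Tsinv n a) = Tb id + hscale (vv - vinv) (Tsinv n a)"
proof -
  have "hmult n (Tsinv n a) (Tsinv n a) = mult_sinv n (Tsinv n a) a"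
    using mult_sinv_hmult[OF Hn_Tsinv[OF a] a] by simp
  also have "\<dots> = mult_s n (Tsinv n a) a + hscale (vv - vinv) (Tsinv n a)"
    by (rule mult_sinv_eq)
  also have "mult_s n (Tsinv n a) a = Tb id"
    using Tsinv_Ts[OF a] mult_s_hmult[OF Hn_Tsinv[OF a] a] by simp
  finally show ?thesis .
qed

lemma Hn_mult_inv_word: "h \<in> Hn n \<Longrightarrow> set as \<subseteq> {1..<n} \<Longrightarrow> mult_inv_word n h as \<in> Hn n"
proof (induction as arbitrary: h)
  case (Cons a as)
  have "mult_sinv n h a \<in> Hn n" using Cons.prems by (intro Hn_mult_sinv) auto
  then show ?case using Cons.IH Cons.prems by simp
qed simp

lemma mult_inv_word_hmult:
  assumes h: "h \<in> Hn n" and as: "set as \<subseteq> {1..<n}"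
  shows "mult_inv_word n h as = hmult n h (mult_inv_word n (Tb id) as)"
  using as
proof (induction as rule: rev_induct)
  case Nil then show ?case by simp
next
  case (snoc a as)
  have a: "1 \<le> a" "a < n" and s: "set as \<subseteq> {1..<n}" using snoc.prems by auto
  have B: "mult_inv_word n (Tb id) as \<in> Hn n" by (rule Hn_mult_inv_word[OF Hn_Tb[OF Sn_id] s])
  have "mult_inv_word n h (as @ [a]) = mult_sinv n (mult_inv_word n h as) a" by simp
  also have "\<dots> = hmult n (hmult n h (mult_inv_word n (Tb id) as)) (Tsinv n a)"
    using snoc.IH[OF s] mult_sinv_hmult[OF Hn_mult_inv_word[OF h s] a] by simp
  also have "\<dots> = hmult n h (hmult n (mult_inv_word n (Tb id) as) (Tsinv n a))"
    by (rule hmult_assoc[OF h B Hn_Tsinv[OF a]])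
  also have "\<dots> = hmult n h (mult_inv_word n (Tb id) (as @ [a]))"
    using mult_sinv_hmult[OF B a] by simp
  finally show ?case .
qed

abbreviation Tprod :: "nat \<Rightarrow> nat list \<Rightarrow> hecke" where
  "Tprod n as \<equiv> mult_word n (Tb id) as"

abbreviation Tinv_prod :: "nat \<Rightarrow> nat list \<Rightarrow> hecke" where
  "Tinv_prod n as \<equiv> mult_inv_word n (Tb id) as"

lemma Hn_Tprod: "set as \<subseteq> {1..<n} \<Longrightarrow> Tprod n as \<in> Hn n"
  by (rule Hn_mult_word[OF Hn_Tb[OF Sn_id]])
lemma Hn_Tinv_prod: "set as \<subseteq> {1..<n} \<Longrightarrow> Tinv_prod n as \<in> Hn n"
  by (rule Hn_mult_inv_word[OF Hn_Tb[OF Sn_id]])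

lemma Tinv_prod_Tprod_inv1: "set as \<subseteq> {1..<n} \<Longrightarrow> hmult n (Tinv_prod n as) (Tprod n (rev as)) = Tb id"
proof (induction as rule: rev_induct)
  case Nil then show ?case by simp
next
  case (snoc a as)
  have a: "1 \<le> a" "a < n" and s: "set as \<subseteq> {1..<n}" using snoc.prems by auto
  have s': "set (rev as) \<subseteq> {1..<n}" using s by simp
  have e1: "Tinv_prod n (as @ [a]) = hmult n (Tinv_prod n as) (Tsinv n a)"
    using mult_sinv_hmult[OF Hn_Tinv_prod[OF s] a] by simp
  have e2: "Tprod n (rev (as @ [a])) = hmult n (Tb (sg a)) (Tprod n (rev as))"
    using mult_word_hmult[OF Hn_Tb[OF sg_Sn[OF a]] s'] mult_s_one[OF a] by simp
  have "hmult n (Tinv_prod n (as @ [a])) (Tprod n (rev (as @ [a])))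
      = hmult n (Tinv_prod n as) (hmult n (hmult n (Tsinv n a) (Tb (sg a))) (Tprod n (rev as)))"
    unfolding e1 e2
    by (simp add: hmult_assoc Hn_Tinv_prod[OF s] Hn_Tsinv[OF a] Hn_Tb[OF sg_Sn[OF a]] Hn_Tprod[OF s'] Hn_hmult)
  also have "\<dots> = Tb id" using snoc.IH[OF s] Tsinv_Ts[OF a] hmult_one_left[OF Hn_Tprod[OF s']] by simp
  finally show ?case .
qed

lemma Tinv_prod_Tprod_inv2: "set as \<subseteq> {1..<n} \<Longrightarrow> hmult n (Tprod n (rev as)) (Tinv_prod n as) = Tb id"
proof (induction as)
  case Nil then show ?case by (simp add: hmult_one_left Hn_Tb)
next
  case (Cons a as)
  have a: "1 \<le> a" "a < n" and s: "set as \<subseteq> {1..<n}" using Cons.prems by auto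
  have s': "set (rev as) \<subseteq> {1..<n}" using s by simp
  have e1: "Tinv_prod n (a # as) = hmult n (Tsinv n a) (Tinv_prod n as)"
    using mult_inv_word_hmult[OF Hn_Tsinv[OF a] s] by (simp add: Tsinv_def)
  have e2: "Tprod n (rev (a # as)) = hmult n (Tprod n (rev as)) (Tb (sg a))"
    using mult_s_hmult[OF Hn_Tprod[OF s'] a] by simp
  have "hmult n (Tprod n (rev (a # as))) (Tinv_prod n (a # as))
      = hmult n (Tprod n (rev as)) (hmult n (hmult n (Tb (sg a)) (Tsinv n a)) (Tinv_prod n as))"
    unfolding e1 e2
    by (simp add: hmult_assoc Hn_Tinv_prod[OF s] Hn_Tsinv[OF a] Hn_Tb[OF sg_Sn[OF a]] Hn_Tprod[OF s'] Hn_hmult)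
  also have "\<dots> = Tb id" using Cons.IH[OF s] Ts_Tsinv[OF a] hmult_one_left[OF Hn_Tinv_prod[OF s]] by simp
  finally show ?case .
qed

lemma Tprod_rev_reduced:
  "reduced n as \<Longrightarrow> Tprod n (rev as) = Tb (inv (word_prod as))"
  using mult_word_Tb_reduced[OF reduced_rev] word_prod_rev by metis

lemma barT_word:
  assumes r: "reduced n as"
  shows "barT n (word_prod as) = Tinv_prod n as"
proof -
  let ?w = "word_prod as"
  have s: "set as \<subseteq> {1..<n}" using r by (simp add: reduced_def)
  have w: "?w \<in> Sn n" by (rule word_prod_Sn[OF s])
  let ?bs = "rword n ?w"
  have rb: "reduced n ?bs" by (rule rword_reduced[OF w])
  have sb: "set ?bs \<subseteq> {1..<n}" using rword_set[OF w] .
  have T: "Tb (inv ?w) \<in> Hn n" using w by (simp add: Hn_Tb Sn_inv)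
  have i1: "hmult n (Tinv_prod n as) (Tb (inv ?w)) = Tb id"
    using Tinv_prod_Tprod_inv1[OF s] Tprod_rev_reduced[OF r] by simp
  have i2: "hmult n (Tb (inv ?w)) (Tinv_prod n ?bs) = Tb id"
    using Tinv_prod_Tprod_inv2[OF sb] Tprod_rev_reduced[OF rb] rword_spec(3)[OF w] by simp
  have "Tinv_prod n as = hmult n (Tinv_prod n as) (hmult n (Tb (inv ?w)) (Tinv_prod n ?bs))"
    using i2 by simp
  also have "\<dots> = hmult n (hmult n (Tinv_prod n as) (Tb (inv ?w))) (Tinv_prod n ?bs)"
    by (rule hmult_assoc[symmetric, OF Hn_Tinv_prod[OF s] T Hn_Tinv_prod[OF sb]])
  also have "\<dots> = Tinv_prod n ?bs" using i1 hmult_one_left[OF Hn_Tinv_prod[OF sb]] by simp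
  finally show ?thesis by (simp add: barT_mult_inv_word)
qed

lemma Hn_barT: "w \<in> Sn n \<Longrightarrow> barT n w \<in> Hn n"
  unfolding barT_mult_inv_word by (rule Hn_Tinv_prod[OF rword_set])


definition hantilinear :: "(hecke \<Rightarrow> hecke) \<Rightarrow> bool" where
  "hantilinear F \<longleftrightarrow> (\<forall>h g. F (h + g) = F h + F g) \<and> (\<forall>c h. F (hscale c h) = hscale (lbar c) (F h))"

lemma hantilinearI: "(\<And>h g. F (h + g) = F h + F g) \<Longrightarrow> (\<And>c h. F (hscale c h) = hscale (lbar c) (F h)) \<Longrightarrow> hantilinear F"
  unfolding hantilinear_def by blast
lemma hantilinear_add: "hantilinear F \<Longrightarrow> F (h + g) = F h + F g"
  unfolding hantilinear_def by blast
lemma hantilinear_scale: "hantilinear F \<Longrightarrow> F (hscale c h) = hscale (lbar c) (F h)"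
  unfolding hantilinear_def by blast
lemma hantilinear_zero: "hantilinear F \<Longrightarrow> F 0 = 0"
  using hantilinear_scale[of F 0 0] by simp
lemma hantilinear_sum: "hantilinear F \<Longrightarrow> F (\<Sum>w\<in>A. f w) = (\<Sum>w\<in>A. F (f w))"
  by (induction A rule: infinite_finite_induct) (auto simp: hantilinear_zero hantilinear_add)
lemma hantilinear_diff: "hantilinear F \<Longrightarrow> F (h - g) = F h - F g"
  by (metis add_diff_cancel_right' diff_add_cancel hantilinear_add)
lemma hantilinear_comp1: "hlinear F \<Longrightarrow> hantilinear G \<Longrightarrow> hantilinear (F \<circ> G)"
  unfolding hlinear_def hantilinear_def by simp
lemma hantilinear_comp2: "hantilinear F \<Longrightarrow> hlinear G \<Longrightarrow> hantilinear (F \<circ> G)"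
  unfolding hlinear_def hantilinear_def by simp

lemma hantilinear_eq_on_Hn:
  assumes "hantilinear F" "hantilinear G" "\<And>w. w \<in> Sn n \<Longrightarrow> F (Tb w) = G (Tb w)" "h \<in> Hn n"
  shows "F h = G h"
proof -
  have "F h = F (\<Sum>w\<in>Sn n. hscale (h w) (Tb w))" using Tb_expansion[OF assms(4)] by simp
  also have "\<dots> = (\<Sum>w\<in>Sn n. hscale (lbar (h w)) (F (Tb w)))" by (simp add: hantilinear_sum[OF assms(1)] hantilinear_scale[OF assms(1)])
  also have "\<dots> = (\<Sum>w\<in>Sn n. hscale (lbar (h w)) (G (Tb w)))" using assms(3) by simp
  also have "\<dots> = G (\<Sum>w\<in>Sn n. hscale (h w) (Tb w))" by (simp add: hantilinear_sum[OF assms(2)] hantilinear_scale[OF assms(2)])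
  finally show ?thesis using Tb_expansion[OF assms(4)] by simp
qed

lemma hbar_eq: "hbar n h = (\<Sum>w\<in>Sn n. hscale (lbar (h w)) (barT n w))"
  unfolding hbar_def hsum_eq ..

lemma hantilinear_hbar: "hantilinear (hbar n)"
proof (rule hantilinearI)
  fix h g show "hbar n (h + g) = hbar n h + hbar n g"
    unfolding hbar_eq by (simp add: hscale_add2 sum.distrib)
next
  fix c h show "hbar n (hscale c h) = hscale (lbar c) (hbar n h)"
    unfolding hbar_eq hscale_sum by simp
qed

lemma hbar_Tb: "w \<in> Sn n \<Longrightarrow> hbar n (Tb w) = barT n w"
proof -
  assume w: "w \<in> Sn n"
  have "hbar n (Tb w) = (\<Sum>x\<in>Sn n. if x = w then barT n x else 0)"
    unfolding hbar_eq by (rule sum.cong) (auto simp: Tb_apply)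
  also have "\<dots> = barT n w" using w by simp
  finally show ?thesis .
qed

lemma Hn_hbar: "hbar n h \<in> Hn n"
  unfolding hbar_eq by (intro Hn_sum Hn_scale Hn_barT)

lemma hbar_one: "hbar n (Tb id) = Tb id"
  by (simp add: hbar_Tb barT_mult_inv_word)

lemma barT_comp_sg_up:
  assumes u: "u \<in> Sn n" and a: "1 \<le> a" "a < n" and up: "u a < u (a + 1)"
  shows "barT n (u \<circ> sg a) = mult_sinv n (barT n u) a"
proof -
  have r: "reduced n (rword n u @ [a])"
    using reduced_snoc[OF rword_reduced[OF u] a] rword_spec(3)[OF u] up by simp
  have "word_prod (rword n u @ [a]) = u \<circ> sg a" using rword_spec(3)[OF u] by simp
  then have "barT n (u \<circ> sg a) = Tinv_prod n (rword n u @ [a])" using barT_word[OF r] by simp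
  then show ?thesis by (simp add: barT_mult_inv_word)
qed

lemma mult_sinv_mult_sinv:
  assumes Y: "Y \<in> Hn n" and a: "1 \<le> a" "a < n"
  shows "mult_sinv n (mult_sinv n Y a) a = Y + hscale (vv - vinv) (mult_sinv n Y a)"
proof -
  have "mult_sinv n (mult_sinv n Y a) a = hmult n (hmult n Y (Tsinv n a)) (Tsinv n a)"
    using mult_sinv_hmult[OF Y a] mult_sinv_hmult[OF Hn_mult_sinv[OF Y a] a] by simp
  also have "\<dots> = hmult n Y (hmult n (Tsinv n a) (Tsinv n a))"
    by (rule hmult_assoc[OF Y Hn_Tsinv[OF a] Hn_Tsinv[OF a]])
  also have "\<dots> = Y + hscale (vv - vinv) (hmult n Y (Tsinv n a))"
    unfolding Tsinv_Tsinv[OF a] hlinear_add[OF hlinear_hmult_right] hlinear_scale[OF hlinear_hmult_right]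
    by simp
  finally show ?thesis using mult_sinv_hmult[OF Y a] by simp
qed

lemma hbar_mult_s:
  assumes X: "X \<in> Hn n" and a: "1 \<le> a" "a < n"
  shows "hbar n (mult_s n X a) = mult_sinv n (hbar n X) a"
proof (rule hantilinear_eq_on_Hn[OF _ _ _ X])
  show "hantilinear (\<lambda>X. hbar n (mult_s n X a))"
    using hantilinear_comp2[OF hantilinear_hbar hlinear_mult_s] by (simp add: comp_def)
  show "hantilinear (\<lambda>X. mult_sinv n (hbar n X) a)"
    using hantilinear_comp1[OF hlinear_mult_sinv hantilinear_hbar] by (simp add: comp_def)
next
  fix u assume u: "u \<in> Sn n"
  have us: "u \<circ> sg a \<in> Sn n" using u a by (simp add: Sn_comp sg_Sn)
  have "u a \<noteq> u (a + 1)" using Sn_inj[OF u] by (simp add: inj_eq)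
  then consider (up) "u a < u (a + 1)" | (down) "u (a + 1) < u a" by linarith
  then show "hbar n (mult_s n (Tb u) a) = mult_sinv n (hbar n (Tb u)) a"
  proof cases
    case up
    then show ?thesis
      using mult_s_Tb_up[OF u a up] barT_comp_sg_up[OF u a up] hbar_Tb[OF u] hbar_Tb[OF us] by simp
  next
    case down
    have bu: "barT n u = mult_sinv n (barT n (u \<circ> sg a)) a"
      using barT_comp_sg_up[OF us a] down by (simp add: comp_assoc)
    have "hbar n (mult_s n (Tb u) a) = hbar n (Tb (u \<circ> sg a) + hscale (vinv - vv) (Tb u))"
      using mult_s_Tb_down[OF u a down] by simp
    also have "\<dots> = barT n (u \<circ> sg a) + hscale (vv - vinv) (barT n u)"
      using hantilinear_add[OF hantilinear_hbar] hantilinear_scale[OF hantilinear_hbar]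
        hbar_Tb[OF u] hbar_Tb[OF us] by simp
    also have "\<dots> = mult_sinv n (barT n u) a"
      unfolding bu mult_sinv_mult_sinv[OF Hn_barT[OF us] a] ..
    finally show ?thesis using hbar_Tb[OF u] by simp
  qed
qed

lemma hbar_mult_word: "X \<in> Hn n \<Longrightarrow> set as \<subseteq> {1..<n} \<Longrightarrow> hbar n (mult_word n X as) = mult_inv_word n (hbar n X) as"
proof (induction as arbitrary: X)
  case (Cons a as)
  have a: "1 \<le> a" "a < n" and s: "set as \<subseteq> {1..<n}" using Cons.prems by auto
  have "hbar n (mult_word n X (a # as)) = hbar n (mult_word n (mult_s n X a) as)" by simp
  also have "\<dots> = mult_inv_word n (hbar n (mult_s n X a)) as"
    by (rule Cons.IH[OF Hn_mult_s[OF Cons.prems(1) a] s])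
  also have "\<dots> = mult_inv_word n (hbar n X) (a # as)" using hbar_mult_s[OF Cons.prems(1) a] by simp
  finally show ?case .
qed simp

lemma hbar_hmult:
  assumes h: "h \<in> Hn n" and g: "g \<in> Hn n"
  shows "hbar n (hmult n h g) = hmult n (hbar n h) (hbar n g)"
proof -
  have "hbar n (hmult n h g) = (\<Sum>w\<in>Sn n. hscale (lbar (g w)) (hbar n (mult_word n h (rword n w))))"
    unfolding hmult_eq hantilinear_sum[OF hantilinear_hbar] hantilinear_scale[OF hantilinear_hbar] ..
  also have "\<dots> = (\<Sum>w\<in>Sn n. hscale (lbar (g w)) (hmult n (hbar n h) (barT n w)))"
    by (rule sum.cong[OF refl])
       (simp add: hbar_mult_word[OF h rword_set] mult_inv_word_hmult[OF Hn_hbar rword_set] barT_mult_inv_word)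
  also have "\<dots> = hmult n (hbar n h) (hbar n g)"
    unfolding hbar_eq[of n g] hlinear_sum[OF hlinear_hmult_right] hlinear_scale[OF hlinear_hmult_right] ..
  finally show ?thesis .
qed

lemma hbar_Tsinv:
  assumes a: "1 \<le> a" "a < n"
  shows "hbar n (Tsinv n a) = Tb (sg a)"
proof -
  have r: "reduced n [a]" using a len_up[OF a, of id] by (simp add: reduced_def)
  have bs: "barT n (sg a) = Tsinv n a" using barT_word[OF r] by (simp add: Tsinv_def)
  have "hbar n (Tsinv n a) = hbar n (Tb (sg a)) + hscale (vinv - vv) (hbar n (Tb id))"
    unfolding Tsinv_eq[OF a] hantilinear_add[OF hantilinear_hbar] hantilinear_scale[OF hantilinear_hbar] by simp
  also have "\<dots> = Tb (sg a) + (hscale (vv - vinv) (Tb id) + hscale (vinv - vv) (Tb id))"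
    unfolding hbar_Tb[OF sg_Sn[OF a]] hbar_one bs Tsinv_eq[OF a] by (simp add: add.assoc)
  finally show ?thesis using hscale_opposite_cancel by (simp add: add.commute)
qed

lemma hbar_Tinv_prod: "set as \<subseteq> {1..<n} \<Longrightarrow> hbar n (Tinv_prod n as) = Tprod n as"
proof (induction as rule: rev_induct)
  case Nil then show ?case by (simp add: hbar_one)
next
  case (snoc a as)
  have a: "1 \<le> a" "a < n" and s: "set as \<subseteq> {1..<n}" using snoc.prems by auto
  have "hbar n (Tinv_prod n (as @ [a])) = hbar n (hmult n (Tinv_prod n as) (Tsinv n a))"
    using mult_sinv_hmult[OF Hn_Tinv_prod[OF s] a] by simp
  also have "\<dots> = hmult n (Tprod n as) (Tb (sg a))"
    using hbar_hmult[OF Hn_Tinv_prod[OF s] Hn_Tsinv[OF a]] snoc.IH[OF s] hbar_Tsinv[OF a] by simp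
  also have "\<dots> = Tprod n (as @ [a])" using mult_s_hmult[OF Hn_Tprod[OF s] a] by simp
  finally show ?case .
qed

lemma hbar_barT: "w \<in> Sn n \<Longrightarrow> hbar n (barT n w) = Tb w"
  using hbar_Tinv_prod[OF rword_set] mult_word_Tb_reduced[OF rword_reduced] rword_spec(3) barT_mult_inv_word by metis


section \<open>Triangularity of the bar involution\<close>

lemma bruhat_le_refl[simp]: "bruhat_le n x x"
  by (simp add: bruhat_le_def)

lemma bruhat_le_len: "bruhat_le n y w \<Longrightarrow> len n y \<le> len n w"
  unfolding bruhat_le_def using bruhat_lt_D(3) by fastforce

lemma bruhat_le_lt_trans: "bruhat_le n x y \<Longrightarrow> bruhat_lt n y z \<Longrightarrow> bruhat_lt n x z"
  unfolding bruhat_le_def using bruhat_lt_trans by blast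

lemma Tinv_prod_triangular:
  "reduced n as \<Longrightarrow> Tinv_prod n as (word_prod as) = 1 \<and> (\<forall>y. Tinv_prod n as y \<noteq> 0 \<longrightarrow> bruhat_le n y (word_prod as))"
proof (induction as rule: rev_induct)
  case Nil then show ?case by (simp add: Tb_apply)
next
  case (snoc a as)
  note r = reduced_snoc_len[OF snoc.prems]
  have ras: "reduced n as" using reduced_append1 snoc.prems by blast
  let ?w = "word_prod as"
  let ?h = "Tinv_prod n as"
  have w: "?w \<in> Sn n" using ras by (simp add: reduced_def word_prod_Sn)
  note IH = snoc.IH[OF ras]
  have e: "Tinv_prod n (as @ [a]) = mult_sinv n ?h a" by simp
  have word_prod: "word_prod (as @ [a]) = ?w \<circ> sg a" by simp
  have ww': "bruhat_lt n ?w (?w \<circ> sg a)" by (rule bruhat_lt_sg[OF w r(3,4,2)])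
  have hw': "?h (?w \<circ> sg a) = 0"
  proof (rule ccontr)
    assume "?h (?w \<circ> sg a) \<noteq> 0"
    then have "bruhat_le n (?w \<circ> sg a) ?w" using IH by blast
    then have "len n (?w \<circ> sg a) \<le> len n ?w" by (rule bruhat_le_len)
    then show False using r(1) by simp
  qed
  have v1: "mult_sinv n ?h a (?w \<circ> sg a) = 1"
    using IH hw' by (simp add: mult_sinv_def mult_s_def)
  have supp: "bruhat_le n y (?w \<circ> sg a)" if "mult_sinv n ?h a y \<noteq> 0" for y
  proof -
    have "?h (y \<circ> sg a) \<noteq> 0 \<or> ?h y \<noteq> 0" using that by (auto simp: mult_sinv_def mult_s_def split: if_splits)
    then show ?thesis
    proof
      assume "?h (y \<circ> sg a) \<noteq> 0"
      then have "bruhat_le n (y \<circ> sg a) ?w" using IH by blast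
      then have "bruhat_le n (y \<circ> sg a \<circ> sg a) (?w \<circ> sg a)" by (rule bruhat_le_comp_sg[OF _ w r(3,4,2)])
      then show ?thesis by simp
    next
      assume "?h y \<noteq> 0"
      then have "bruhat_le n y ?w" using IH by blast
      then show ?thesis using bruhat_le_lt_trans[OF _ ww'] by (simp add: bruhat_le_def)
    qed
  qed
  show ?case unfolding e word_prod using v1 supp by blast
qed

lemma barT_triangular:
  assumes w: "w \<in> Sn n"
  shows "barT n w w = 1" "barT n w y \<noteq> 0 \<Longrightarrow> bruhat_le n y w"
  using Tinv_prod_triangular[OF rword_reduced[OF w]] rword_spec(3)[OF w] barT_mult_inv_word by auto

section \<open>Uniqueness of the Kazhdan--Lusztig basis\<close>

lemma obtain_max_len:
  assumes "finite S" "S \<noteq> {}"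
  obtains y where "y \<in> S" "\<And>z. z \<in> S \<Longrightarrow> len n z \<le> len n y"
proof -
  have "Max (len n ` S) \<in> len n ` S" using assms by (intro Max_in) auto
  then obtain y where "y \<in> S" "len n y = Max (len n ` S)" by auto
  moreover have "\<And>z. z \<in> S \<Longrightarrow> len n z \<le> Max (len n ` S)" using assms by simp
  ultimately show ?thesis using that by metis
qed

lemma bar_invariant_vZv_eq_0:
  assumes D: "D \<in> Hn n" and b: "hbar n D = D" and v: "\<And>y. in_vZv (D y)"
  shows "D = 0"
proof (rule ccontr)
  assume "D \<noteq> 0"
  then obtain y0 where "D y0 \<noteq> 0" by (auto simp: fun_eq_iff)
  let ?S = "{y \<in> Sn n. D y \<noteq> 0}"
  have "y0 \<in> ?S" using \<open>D y0 \<noteq> 0\<close> HnD[OF D] by auto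
  then obtain y where y: "y \<in> ?S" and mx: "\<And>z. z \<in> ?S \<Longrightarrow> len n z \<le> len n y"
    using obtain_max_len[of ?S] by (metis (no_types, lifting) Sn_finite empty_iff finite_subset mem_Collect_eq subsetI)
  have "hbar n D y = (\<Sum>w\<in>Sn n. lbar (D w) * barT n w y)"
    unfolding hbar_eq by (simp add: sum_fun_apply)
  also have "\<dots> = (\<Sum>w\<in>Sn n. if w = y then lbar (D w) else 0)"
  proof (rule sum.cong[OF refl])
    fix w assume w: "w \<in> Sn n"
    show "lbar (D w) * barT n w y = (if w = y then lbar (D w) else 0)"
    proof (cases "w = y")
      case True then show ?thesis using barT_triangular(1)[OF w] by simp
    next
      case False
      show ?thesis
      proof (cases "D w = 0 \<or> barT n w y = 0")
        case True then show ?thesis using False by auto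
      next
        case nz: False
        then have "bruhat_le n y w" using barT_triangular(2)[OF w] by auto
        then have "bruhat_lt n y w" using False by (simp add: bruhat_le_def)
        then have "len n y < len n w" by (rule bruhat_lt_D)
        moreover have "len n w \<le> len n y" using mx[of w] nz w by auto
        ultimately show ?thesis by simp
      qed
    qed
  qed
  also have "\<dots> = lbar (D y)" using y by simp
  finally have "D y = lbar (D y)" using b by simp
  then have "D y = 0" using in_vZv_bar_fix[OF v] by simp
  then show False using y by simp
qed

definition is_KL :: "nat \<Rightarrow> (nat \<Rightarrow> nat) \<Rightarrow> hecke \<Rightarrow> bool" where
  "is_KL n x h \<longleftrightarrow> h \<in> Hn n \<and> hbar n h = h \<and> h x = 1 \<and>
      (\<forall>y. y \<noteq> x \<longrightarrow> h y \<noteq> 0 \<longrightarrow> bruhat_lt n y x) \<and>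
      (\<forall>y. y \<noteq> x \<longrightarrow> in_vZv (h y))"

lemma KL_def': "KL n x = (THE h. is_KL n x h)"
  unfolding KL_def is_KL_def ..

lemma is_KL_unique:
  assumes h: "is_KL n x h" and g: "is_KL n x g"
  shows "h = g"
proof -
  let ?D = "h - g"
  have D: "?D \<in> Hn n" using h g by (simp add: is_KL_def Hn_diff)
  have b: "hbar n ?D = ?D"
    using h g hantilinear_diff[OF hantilinear_hbar] by (simp add: is_KL_def)
  have v: "in_vZv (?D y)" for y
  proof (cases "y = x")
    case True then show ?thesis using h g by (simp add: is_KL_def)
  next
    case False
    then have "in_vZv (h y)" "in_vZv (g y)" using h g by (auto simp: is_KL_def)
    then have "in_vZv (h y + (- g y))"
      by (intro in_vZv_add) (auto simp: in_vZv_def lookup_minus)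
    then show ?thesis by simp
  qed
  show ?thesis using bar_invariant_vZv_eq_0[OF D b v] by (simp only: right_minus_eq)
qed

lemma is_KL_KL_if_exists: "\<exists>h. is_KL n x h \<Longrightarrow> is_KL n x (KL n x)"
  unfolding KL_def' using is_KL_unique by (metis theI)


section \<open>Existence of the Kazhdan--Lusztig basis\<close>

lemma is_KL_D:
  assumes "is_KL n x h"
  shows "h \<in> Hn n" "hbar n h = h" "h x = 1" "y \<noteq> x \<Longrightarrow> h y \<noteq> 0 \<Longrightarrow> bruhat_lt n y x"
    "y \<noteq> x \<Longrightarrow> in_vZv (h y)"
  using assms unfolding is_KL_def by auto

lemma KL_lin_indep:
  assumes A: "A \<subseteq> Sn n" and K: "\<And>z. z \<in> A \<Longrightarrow> is_KL n z (K z)"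
    and s: "(\<Sum>z\<in>A. hscale (c z) (K z)) = 0"
  shows "z \<in> A \<Longrightarrow> c z = 0"
proof (rule ccontr)
  assume "z \<in> A" "c z \<noteq> 0"
  let ?S = "{z \<in> A. c z \<noteq> 0}"
  have fA: "finite A" by (rule finite_subset[OF A Sn_finite])
  have fin: "finite ?S" by (rule finite_subset[OF _ fA]) auto
  obtain y where y: "y \<in> ?S" and mx: "\<And>z. z \<in> ?S \<Longrightarrow> len n z \<le> len n y"
    using obtain_max_len[OF fin, of n] \<open>z \<in> A\<close> \<open>c z \<noteq> 0\<close> by blast
  have "0 = (\<Sum>z\<in>A. c z * K z y)" using arg_cong[OF s, of "\<lambda>h. h y"] by (simp add: sum_fun_apply)
  also have "\<dots> = (\<Sum>z\<in>A. if z = y then c z else 0)"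
  proof (rule sum.cong[OF refl])
    fix z assume z: "z \<in> A"
    show "c z * K z y = (if z = y then c z else 0)"
    proof (cases "z = y")
      case True then show ?thesis using is_KL_D(3)[OF K[OF z]] by simp
    next
      case False
      show ?thesis
      proof (cases "c z = 0 \<or> K z y = 0")
        case True then show ?thesis using False by auto
      next
        case nz: False
        then have "bruhat_lt n y z" using is_KL_D(4)[OF K[OF z], of y] False by auto
        then have "len n y < len n z" by (rule bruhat_lt_D)
        moreover have "len n z \<le> len n y" using mx[of z] nz z by auto
        ultimately show ?thesis by simp
      qed
    qed
  qed
  also have "\<dots> = c y" using y fA by simp
  finally show False using y by simp
qed

definition KL_span :: "nat \<Rightarrow> ((nat \<Rightarrow> nat) \<Rightarrow> bool) \<Rightarrow> hecke set" where
  "KL_span n P = {h. \<exists>e. (\<forall>z. e z \<noteq> 0 \<longrightarrow> P z) \<and> h = (\<Sum>z\<in>Sn n. hscale (e z) (KL n z))}"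

lemma KL_span_zero: "0 \<in> KL_span n P"
  unfolding KL_span_def by (intro CollectI exI[of _ "\<lambda>_. 0"]) simp

lemma KL_span_add: "h \<in> KL_span n P \<Longrightarrow> g \<in> KL_span n P \<Longrightarrow> h + g \<in> KL_span n P"
proof -
  assume "h \<in> KL_span n P" "g \<in> KL_span n P"
  then obtain e f where e: "\<forall>z. e z \<noteq> 0 \<longrightarrow> P z" "h = (\<Sum>z\<in>Sn n. hscale (e z) (KL n z))"
    and f: "\<forall>z. f z \<noteq> 0 \<longrightarrow> P z" "g = (\<Sum>z\<in>Sn n. hscale (f z) (KL n z))"
    unfolding KL_span_def by blast
  have "h + g = (\<Sum>z\<in>Sn n. hscale (e z + f z) (KL n z))"
    unfolding e f by (simp add: hscale_add2 sum.distrib)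
  moreover have "\<forall>z. e z + f z \<noteq> 0 \<longrightarrow> P z" using e(1) f(1) by (metis add.left_neutral)
  ultimately show ?thesis unfolding KL_span_def by (intro CollectI exI[of _ "\<lambda>z. e z + f z"]) simp
qed

lemma KL_span_scale: "h \<in> KL_span n P \<Longrightarrow> hscale c h \<in> KL_span n P"
proof -
  assume "h \<in> KL_span n P"
  then obtain e where e: "\<forall>z. e z \<noteq> 0 \<longrightarrow> P z" "h = (\<Sum>z\<in>Sn n. hscale (e z) (KL n z))"
    unfolding KL_span_def by blast
  have "hscale c h = (\<Sum>z\<in>Sn n. hscale (c * e z) (KL n z))"
    unfolding e by (simp add: hscale_sum)
  moreover have "\<forall>z. c * e z \<noteq> 0 \<longrightarrow> P z" using e by auto
  ultimately show ?thesis unfolding KL_span_def by (intro CollectI exI[of _ "\<lambda>z. c * e z"]) simp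
qed

lemma KL_span_sum: "(\<And>w. w \<in> A \<Longrightarrow> f w \<in> KL_span n P) \<Longrightarrow> (\<Sum>w\<in>A. f w) \<in> KL_span n P"
  by (induction A rule: infinite_finite_induct) (auto intro: KL_span_add KL_span_zero)

lemma KL_span_diff: "h \<in> KL_span n P \<Longrightarrow> g \<in> KL_span n P \<Longrightarrow> h - g \<in> KL_span n P"
proof -
  assume "h \<in> KL_span n P" "g \<in> KL_span n P"
  then have "h + hscale (-1) g \<in> KL_span n P" by (intro KL_span_add KL_span_scale)
  moreover have "h + hscale (-1) g = h - g" by (rule ext) simp
  ultimately show ?thesis by simp
qed

lemma sum_hscale_indicator:
  assumes "x \<in> A" "finite A"
  shows "(\<Sum>z\<in>A. hscale (if z = x then 1 else 0) (K z)) = K x"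
proof -
  have "(\<Sum>z\<in>A. hscale (if z = x then 1 else 0) (K z)) = (\<Sum>z\<in>A. if z = x then K z else 0)"
    by (rule sum.cong) auto
  then show ?thesis using assms by simp
qed

lemma KL_span_KL: "z \<in> Sn n \<Longrightarrow> P z \<Longrightarrow> KL n z \<in> KL_span n P"
  unfolding KL_span_def
  by (intro CollectI exI[of _ "\<lambda>x. if x = z then 1 else 0"]) (simp add: sum_hscale_indicator)

lemma KL_span_mono: "h \<in> KL_span n P \<Longrightarrow> (\<And>z. P z \<Longrightarrow> Q z) \<Longrightarrow> h \<in> KL_span n Q"
  unfolding KL_span_def by blast

(* The length bound N lets this be used inside the induction that constructs the basis. *)
lemma Tb_in_KL_span_below:
  assumes KLall: "\<And>z. z \<in> Sn n \<Longrightarrow> len n z < N \<Longrightarrow> is_KL n z (KL n z)"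
  shows "y \<in> Sn n \<Longrightarrow> len n y < N \<Longrightarrow> Tb y \<in> KL_span n (\<lambda>z. bruhat_le n z y)"
proof (induction "len n y" arbitrary: y rule: less_induct)
  case less
  let ?K = "KL n y"
  have K: "is_KL n y ?K" using KLall less.prems by blast
  have eK: "?K = (\<Sum>y'\<in>Sn n. hscale (?K y') (Tb y'))" by (rule Tb_expansion[OF is_KL_D(1)[OF K]])
  also have "\<dots> = hscale (?K y) (Tb y) + (\<Sum>y'\<in>Sn n - {y}. hscale (?K y') (Tb y'))"
    using less.prems(1) by (simp add: sum.remove)
  finally have "Tb y = ?K - (\<Sum>y'\<in>Sn n - {y}. hscale (?K y') (Tb y'))"
    using is_KL_D(3)[OF K] by (simp add: algebra_simps)
  moreover have "?K \<in> KL_span n (\<lambda>z. bruhat_le n z y)" by (rule KL_span_KL[OF less.prems(1)]) simp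
  moreover have "(\<Sum>y'\<in>Sn n - {y}. hscale (?K y') (Tb y')) \<in> KL_span n (\<lambda>z. bruhat_le n z y)"
  proof (rule KL_span_sum)
    fix y' assume y': "y' \<in> Sn n - {y}"
    show "hscale (?K y') (Tb y') \<in> KL_span n (\<lambda>z. bruhat_le n z y)"
    proof (cases "?K y' = 0")
      case True then show ?thesis by (simp add: KL_span_zero)
    next
      case False
      then have lt: "bruhat_lt n y' y" using is_KL_D(4)[OF K, of y'] y' by auto
      then have "len n y' < len n y" by (rule bruhat_lt_D)
      then have "Tb y' \<in> KL_span n (\<lambda>z. bruhat_le n z y')"
        using less.hyps[of y'] y' less.prems(2) by auto
      then have "Tb y' \<in> KL_span n (\<lambda>z. bruhat_le n z y)"
        by (rule KL_span_mono) (use lt bruhat_le_lt_trans in \<open>auto simp: bruhat_le_def\<close>)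
      then show ?thesis by (rule KL_span_scale)
    qed
  qed
  ultimately show ?case by (simp add: KL_span_diff)
qed

lemma barT_minus_Tb_in_KL_span:
  assumes w: "w \<in> Sn n"
    and KLlt: "\<And>z. z \<in> Sn n \<Longrightarrow> len n z < len n w \<Longrightarrow> is_KL n z (KL n z)"
  shows "barT n w - Tb w \<in> KL_span n (\<lambda>z. bruhat_lt n z w)"
proof -
  let ?r = "barT n w - Tb w"
  have supp: "bruhat_lt n y w" if "?r y \<noteq> 0" for y
  proof -
    have "y \<noteq> w" using that barT_triangular(1)[OF w] by (auto simp: Tb_apply)
    moreover have "barT n w y \<noteq> 0" using that \<open>y \<noteq> w\<close> by (simp add: Tb_apply)
    ultimately show ?thesis using barT_triangular(2)[OF w, of y] unfolding bruhat_le_def by blast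
  qed
  have "(\<Sum>y\<in>Sn n. hscale (?r y) (Tb y)) \<in> KL_span n (\<lambda>z. bruhat_lt n z w)"
  proof (rule KL_span_sum)
    fix y assume y: "y \<in> Sn n"
    show "hscale (?r y) (Tb y) \<in> KL_span n (\<lambda>z. bruhat_lt n z w)"
    proof (cases "?r y = 0")
      case True then show ?thesis by (simp add: KL_span_zero del: minus_apply)
    next
      case False
      then have lt: "bruhat_lt n y w" by (rule supp)
      have "Tb y \<in> KL_span n (\<lambda>z. bruhat_le n z y)"
        by (rule Tb_in_KL_span_below[of n "len n w", OF KLlt y]) (use lt bruhat_lt_D in auto)
      then have "Tb y \<in> KL_span n (\<lambda>z. bruhat_lt n z w)"
        by (rule KL_span_mono) (use lt bruhat_le_lt_trans in auto)
      then show ?thesis by (rule KL_span_scale)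
    qed
  qed
  then show ?thesis
    by (subst Tb_expansion[OF Hn_diff[OF Hn_barT[OF w] Hn_Tb[OF w]]])
qed

lemma hbar_KL_combination:
  assumes "\<And>z. z \<in> Sn n \<Longrightarrow> c z \<noteq> 0 \<Longrightarrow> is_KL n z (KL n z)"
  shows "hbar n (\<Sum>z\<in>Sn n. hscale (c z) (KL n z)) = (\<Sum>z\<in>Sn n. hscale (lbar (c z)) (KL n z))"
  unfolding hantilinear_sum[OF hantilinear_hbar] hantilinear_scale[OF hantilinear_hbar]
proof (rule sum.cong[OF refl])
  fix z assume z: "z \<in> Sn n"
  show "hscale (lbar (c z)) (hbar n (KL n z)) = hscale (lbar (c z)) (KL n z)"
  proof (cases "c z = 0")
    case False then show ?thesis using is_KL_D(2)[OF assms[OF z False]] by simp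
  qed simp
qed

lemma KL_coeffs_antisymmetric:
  assumes w: "w \<in> Sn n"
    and KLa: "\<And>z. z \<in> Sn n \<Longrightarrow> a z \<noteq> 0 \<Longrightarrow> is_KL n z (KL n z)"
    and ra: "barT n w - Tb w = (\<Sum>z\<in>Sn n. hscale (a z) (KL n z))"
    and z: "z \<in> Sn n"
  shows "lbar (a z) = - a z"
proof (cases "a z = 0")
  case False
  let ?A = "{z \<in> Sn n. a z \<noteq> 0}"
  have "hbar n (barT n w - Tb w) = Tb w - barT n w"
    using hantilinear_diff[OF hantilinear_hbar] hbar_barT[OF w] hbar_Tb[OF w] by simp
  then have "(\<Sum>z\<in>Sn n. hscale (a z + lbar (a z)) (KL n z)) = 0"
    using hbar_KL_combination[of n a, OF KLa] unfolding ra[symmetric] hscale_add2 sum.distrib by simp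
  moreover have "(\<Sum>z\<in>Sn n. hscale (a z + lbar (a z)) (KL n z))
      = (\<Sum>z\<in>?A. hscale (a z + lbar (a z)) (KL n z))"
    by (rule sum.mono_neutral_right) auto
  ultimately have "a z + lbar (a z) = 0"
    using KL_lin_indep[of ?A n "KL n" "\<lambda>z. a z + lbar (a z)" z] KLa z False by auto
  then show ?thesis by (simp add: eq_neg_iff_add_eq_0 add.commute)
qed simp

lemma in_vZv_KL_combination:
  assumes vZv: "\<And>z. in_vZv (b z)"
    and KLb: "\<And>z. z \<in> Sn n \<Longrightarrow> b z \<noteq> 0 \<Longrightarrow> is_KL n z (KL n z)"
  shows "in_vZv (\<Sum>z\<in>Sn n. b z * KL n z y)"
proof (rule in_vZv_sum[OF Sn_finite])
  fix z assume z: "z \<in> Sn n"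
  show "in_vZv (b z * KL n z y)"
  proof (cases "b z = 0")
    case False
    show ?thesis
    proof (cases "y = z")
      case True then show ?thesis using is_KL_D(3)[OF KLb[OF z False]] vZv by simp
    next
      case False then show ?thesis using in_vZv_mult[OF vZv is_KL_D(5)[OF KLb[OF z \<open>b z \<noteq> 0\<close>]]] by simp
    qed
  qed simp
qed

lemma is_KL_Tb_plus_KL_combination:
  fixes n :: nat and w :: "nat \<Rightarrow> nat" and b :: "(nat \<Rightarrow> nat) \<Rightarrow> laurent"
  defines "C \<equiv> Tb w + (\<Sum>z\<in>Sn n. hscale (b z) (KL n z))"
  assumes w: "w \<in> Sn n" and bar: "hbar n C = C"
    and below: "\<And>z. b z \<noteq> 0 \<Longrightarrow> bruhat_lt n z w"
    and KLb: "\<And>z. z \<in> Sn n \<Longrightarrow> b z \<noteq> 0 \<Longrightarrow> is_KL n z (KL n z)"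
    and vZv: "\<And>z. in_vZv (b z)"
  shows "is_KL n w C"
proof -
  have "hscale (b z) (KL n z) \<in> Hn n" if z: "z \<in> Sn n" for z
  proof (cases "b z = 0")
    case False show ?thesis using is_KL_D(1)[OF KLb[OF z False]] by (rule Hn_scale)
  qed simp
  then have CHn: "C \<in> Hn n"
    unfolding C_def by (intro Hn_add Hn_Tb[OF w] Hn_sum) auto
  have Cval: "C y = (if y = w then 1 else 0) + (\<Sum>z\<in>Sn n. b z * KL n z y)" for y
    unfolding C_def by (simp add: Tb_apply sum_fun_apply)
  have term_below: "bruhat_lt n y w" if "z \<in> Sn n" "b z * KL n z y \<noteq> 0" for z y
  proof -
    have bz: "b z \<noteq> 0" and kz: "KL n z y \<noteq> 0" using that by auto
    have "bruhat_le n y z"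
      using is_KL_D(4)[OF KLb[OF that(1) bz]] kz unfolding bruhat_le_def by blast
    then show ?thesis using below[OF bz] bruhat_le_lt_trans by blast
  qed
  have "(\<Sum>z\<in>Sn n. b z * KL n z w) = 0"
  proof (rule sum.neutral, rule ballI, rule ccontr)
    fix z assume "z \<in> Sn n" "b z * KL n z w \<noteq> 0"
    from term_below[OF this] show False by simp
  qed
  then have Cw: "C w = 1" using Cval[of w] by simp
  have Csupp: "bruhat_lt n y w" if "y \<noteq> w" "C y \<noteq> 0" for y
  proof -
    have "(\<Sum>z\<in>Sn n. b z * KL n z y) \<noteq> 0" using that Cval[of y] by simp
    then obtain z where "z \<in> Sn n" "b z * KL n z y \<noteq> 0"
      by (rule sum.not_neutral_contains_not_neutral)
    then show ?thesis by (rule term_below)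
  qed
  have Cv: "in_vZv (C y)" if "y \<noteq> w" for y
    using in_vZv_KL_combination[of b n y, OF vZv KLb] Cval[of y] that by simp
  show ?thesis unfolding is_KL_def using CHn bar Cw Csupp Cv by blast
qed

lemma KL_exists_step:
  assumes w: "w \<in> Sn n"
    and KLlt: "\<And>z. z \<in> Sn n \<Longrightarrow> len n z < len n w \<Longrightarrow> is_KL n z (KL n z)"
  shows "\<exists>h. is_KL n w h"
proof -
  obtain a where below: "\<And>z. a z \<noteq> 0 \<Longrightarrow> bruhat_lt n z w"
    and ra: "barT n w - Tb w = (\<Sum>z\<in>Sn n. hscale (a z) (KL n z))"
    using barT_minus_Tb_in_KL_span[OF w KLlt] unfolding KL_span_def by blast
  have KLa: "is_KL n z (KL n z)" if "z \<in> Sn n" "a z \<noteq> 0" for z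
    using KLlt[OF that(1)] bruhat_lt_D(3)[OF below[OF that(2)]] by simp
  define b where "b z = pos_part (a z)" for z
  have b_below: "a z \<noteq> 0" if "b z \<noteq> 0" for z
    using that unfolding b_def by (auto intro: poly_mapping_eqI)
  have "lbar (a z) = - a z" for z
  proof (cases "z \<in> Sn n")
    case False
    then have "a z = 0" using below bruhat_lt_D(1) by blast
    then show ?thesis by simp
  qed (rule KL_coeffs_antisymmetric[OF w KLa ra])
  \<comment> \<open>Bar-antisymmetry of \<open>a\<close> makes \<open>b - bar b = a\<close>, which is what bar-invariance needs.\<close>
  then have bab: "a z + lbar (b z) = b z" for z
    using pos_part_antisym unfolding b_def by (simp add: algebra_simps)
  have "hbar n (Tb w + (\<Sum>z\<in>Sn n. hscale (b z) (KL n z)))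
      = Tb w + (\<Sum>z\<in>Sn n. hscale (a z + lbar (b z)) (KL n z))"
  proof -
    have "barT n w = Tb w + (\<Sum>z\<in>Sn n. hscale (a z) (KL n z))"
      using ra by (simp add: algebra_simps)
    moreover have "hbar n (\<Sum>z\<in>Sn n. hscale (b z) (KL n z)) = (\<Sum>z\<in>Sn n. hscale (lbar (b z)) (KL n z))"
      using hbar_KL_combination KLa b_below by blast
    ultimately show ?thesis
      by (simp add: hantilinear_add[OF hantilinear_hbar] hbar_Tb[OF w] add.assoc hscale_add2 sum.distrib)
  qed
  also have "\<dots> = Tb w + (\<Sum>z\<in>Sn n. hscale (b z) (KL n z))"
    by (simp only: bab)
  finally have "is_KL n w (Tb w + (\<Sum>z\<in>Sn n. hscale (b z) (KL n z)))"
  proof (rule is_KL_Tb_plus_KL_combination[OF w])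
    show "\<And>z. b z \<noteq> 0 \<Longrightarrow> bruhat_lt n z w" using below b_below by blast
    show "\<And>z. z \<in> Sn n \<Longrightarrow> b z \<noteq> 0 \<Longrightarrow> is_KL n z (KL n z)" using KLa b_below by blast
    show "\<And>z. in_vZv (b z)" by (simp add: b_def pos_part_vZv)
  qed
  then show ?thesis by blast
qed

lemma KL_exists: "w \<in> Sn n \<Longrightarrow> \<exists>h. is_KL n w h"
proof (induction "len n w" arbitrary: w rule: less_induct)
  case less
  show ?case
  proof (rule KL_exists_step[OF less.prems])
    fix z assume "z \<in> Sn n" "len n z < len n w"
    then show "is_KL n z (KL n z)" using less.hyps is_KL_KL_if_exists by blast
  qed
qed

lemma is_KL_KL: "w \<in> Sn n \<Longrightarrow> is_KL n w (KL n w)"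
  using KL_exists is_KL_KL_if_exists by blast

lemma KL_Hn: "w \<in> Sn n \<Longrightarrow> KL n w \<in> Hn n"
  using is_KL_D(1)[OF is_KL_KL] .

lemma KL_eqI: "w \<in> Sn n \<Longrightarrow> is_KL n w h \<Longrightarrow> KL n w = h"
  using is_KL_KL is_KL_unique by blast

lemma Tb_in_KL_span: "y \<in> Sn n \<Longrightarrow> Tb y \<in> KL_span n (\<lambda>z. bruhat_le n z y)"
  by (rule Tb_in_KL_span_below[of n "Suc (len n y)"]) (auto intro: is_KL_KL)


section \<open>Trace and the dual basis\<close>

lemma tau_add[simp]: "tau (h + g) = tau h + tau g" by (simp add: tau_def)
lemma tau_scale[simp]: "tau (hscale c h) = c * tau h" by (simp add: tau_def)
lemma tau_sum: "tau (\<Sum>w\<in>A. f w) = (\<Sum>w\<in>A. tau (f w))" by (simp add: tau_def sum_fun_apply)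
lemma tau_zero[simp]: "tau 0 = 0" by (simp add: tau_def)
lemma tau_diff[simp]: "tau (h - g) = tau h - tau g" by (simp add: tau_def)

lemma mult_word_id_reduced:
  "reduced n as \<Longrightarrow> mult_word n h as id = h (inv (word_prod as))"
proof (induction as arbitrary: h)
  case Nil then show ?case by simp
next
  case (Cons a as)
  have r: "reduced n as" using reduced_append2[of n "[a]" as] Cons.prems by simp
  have a: "1 \<le> a" "a < n" using Cons.prems by (auto simp: reduced_def)
  have rr: "reduced n (rev as @ [a])" using reduced_rev[OF Cons.prems] by simp
  have "inv (word_prod (a # as)) = word_prod (rev (a # as))" by (rule word_prod_rev)
  also have "\<dots> = word_prod (rev as) \<circ> sg a" by simp
  also have "\<dots> = inv (word_prod as) \<circ> sg a" by (simp only: word_prod_rev)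
  finally have e: "inv (word_prod as) \<circ> sg a = inv (word_prod (a # as))" by simp
  have "len n (inv (word_prod (a # as))) = length as + 1"
    using rr word_prod_rev[of "a # as"] by (simp add: reduced_def)
  moreover have "len n (inv (word_prod as)) = length as"
    using reduced_rev[OF r] word_prod_rev[of as] by (simp add: reduced_def)
  ultimately have nl: "\<not> len n (inv (word_prod as) \<circ> sg a) < len n (inv (word_prod as))"
    unfolding e by simp
  have "mult_word n h (a # as) id = mult_s n h a (inv (word_prod as))"
    using Cons.IH[OF r] by simp
  also have "\<dots> = h (inv (word_prod (a # as)))"
    unfolding mult_s_def using nl e by simp
  finally show ?case .
qed

lemma tau_mult_word_rword: "w \<in> Sn n \<Longrightarrow> tau (mult_word n h (rword n w)) = h (inv w)"
proof -
  assume w: "w \<in> Sn n"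
  have "tau (mult_word n h (rword n w)) = h (inv (word_prod (rword n w)))"
    unfolding tau_def by (rule mult_word_id_reduced[OF rword_reduced[OF w]])
  then show ?thesis using rword_spec(3)[OF w] by simp
qed

lemma tau_hmult_Tb: "w \<in> Sn n \<Longrightarrow> tau (hmult n h (Tb w)) = h (inv w)"
  by (simp add: hmult_Tb tau_mult_word_rword)

lemma tau_hmult: "tau (hmult n h g) = (\<Sum>w\<in>Sn n. g w * h (inv w))"
proof -
  have "tau (hmult n h g) = (\<Sum>w\<in>Sn n. g w * tau (mult_word n h (rword n w)))"
    unfolding hmult_eq tau_sum tau_scale ..
  also have "\<dots> = (\<Sum>w\<in>Sn n. g w * h (inv w))"
    by (rule sum.cong) (auto simp: tau_mult_word_rword)
  finally show ?thesis .
qed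

lemma hscale_diff2: "hscale (c - d) h = hscale c h - hscale d h"
  by (rule ext) (simp add: left_diff_distrib)

lemma KL_coeffs_unique:
  assumes "(\<Sum>z\<in>Sn n. hscale (c z) (KL n z)) = (\<Sum>z\<in>Sn n. hscale (d z) (KL n z))"
    and z: "z \<in> Sn n"
  shows "c z = d z"
proof -
  have "(\<Sum>z\<in>Sn n. hscale (c z - d z) (KL n z)) = 0"
    using assms(1) by (simp add: hscale_diff2 sum_subtractf)
  then have "c z - d z = 0"
    using KL_lin_indep[of "Sn n" n "KL n" "\<lambda>z. c z - d z" z] is_KL_KL z by blast
  then show ?thesis by simp
qed

definition is_DKL :: "nat \<Rightarrow> (nat \<Rightarrow> nat) \<Rightarrow> hecke \<Rightarrow> bool" where
  "is_DKL n x h \<longleftrightarrow> h \<in> Hn n \<and>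
      (\<forall>y\<in>Sn n. tau (hmult n h (KL n (inv y))) = (if x = y then 1 else 0))"

lemma DKL_def': "DKL n x = (THE h. is_DKL n x h)"
  unfolding DKL_def is_DKL_def ..

lemma Tb_KL_coeffs: "w \<in> Sn n \<Longrightarrow> \<exists>e. Tb w = (\<Sum>z\<in>Sn n. hscale (e z) (KL n z))"
  using Tb_in_KL_span unfolding KL_span_def by blast

lemma is_DKL_unique:
  assumes h: "is_DKL n x h" and g: "is_DKL n x g"
  shows "h = g"
proof -
  let ?E = "h - g"
  have E: "?E \<in> Hn n" using h g by (simp add: is_DKL_def Hn_diff)
  have tK: "tau (hmult n ?E (KL n z)) = 0" if z: "z \<in> Sn n" for z
  proof -
    have iz: "inv z \<in> Sn n" using z by auto
    have "hmult n ?E (KL n z) = hmult n h (KL n (inv (inv z))) - hmult n g (KL n (inv (inv z)))"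
      using z hlinear_diff[OF hlinear_hmult_left] by simp
    then show ?thesis using h g iz unfolding is_DKL_def by simp
  qed
  have "?E u = 0" for u
  proof (cases "u \<in> Sn n")
    case False then show ?thesis using HnD[OF E] by simp
  next
    case True
    then have iu: "inv u \<in> Sn n" by auto
    obtain e where e: "Tb (inv u) = (\<Sum>z\<in>Sn n. hscale (e z) (KL n z))" using Tb_KL_coeffs[OF iu] by blast
    have "?E u = tau (hmult n ?E (Tb (inv u)))" using tau_hmult_Tb[OF iu] True by simp
    also have "\<dots> = (\<Sum>z\<in>Sn n. e z * tau (hmult n ?E (KL n z)))"
      unfolding e hlinear_sum[OF hlinear_hmult_right] hlinear_scale[OF hlinear_hmult_right] tau_sum by simp
    also have "\<dots> = 0" using tK by simp
    finally show ?thesis .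
  qed
  then show ?thesis by (simp add: fun_eq_iff)
qed

lemma Hn_KL_expansion:
  assumes E: "\<And>w. w \<in> Sn n \<Longrightarrow> Tb w = (\<Sum>z\<in>Sn n. hscale (E w z) (KL n z))"
    and h: "h \<in> Hn n"
  shows "h = (\<Sum>z\<in>Sn n. hscale (\<Sum>w\<in>Sn n. h w * E w z) (KL n z))"
proof -
  have "h = (\<Sum>w\<in>Sn n. hscale (h w) (Tb w))" by (rule Tb_expansion[OF h])
  also have "\<dots> = (\<Sum>w\<in>Sn n. hscale (h w) (\<Sum>z\<in>Sn n. hscale (E w z) (KL n z)))"
    by (rule sum.cong) (auto simp: E)
  also have "\<dots> = (\<Sum>w\<in>Sn n. \<Sum>z\<in>Sn n. hscale (h w * E w z) (KL n z))"
    by (simp add: hscale_sum)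
  also have "\<dots> = (\<Sum>z\<in>Sn n. \<Sum>w\<in>Sn n. hscale (h w * E w z) (KL n z))"
    by (rule sum.swap)
  also have "\<dots> = (\<Sum>z\<in>Sn n. hscale (\<Sum>w\<in>Sn n. h w * E w z) (KL n z))"
    by (simp add: hscale_sum2)
  finally show ?thesis .
qed

lemma DKL_exists:
  assumes x: "x \<in> Sn n"
  shows "\<exists>h. is_DKL n x h"
proof -
  define E where "E w = (SOME e. Tb w = (\<Sum>z\<in>Sn n. hscale (e z) (KL n z)))" for w
  have E: "Tb w = (\<Sum>z\<in>Sn n. hscale (E w z) (KL n z))" if "w \<in> Sn n" for w
    unfolding E_def using someI_ex[OF Tb_KL_coeffs[OF that]] .
  \<comment> \<open>\<open>D\<close> collects the \<open>C\<^bsub>x\<inverse>\<^esub>\<close>-coefficients of the elements \<open>T\<^bsub>u\<inverse>\<^esub>\<close>.\<close>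
  define D where "D u = (if u \<in> Sn n then E (inv u) (inv x) else 0)" for u
  have "tau (hmult n D (KL n (inv y))) = (if x = y then 1 else 0)" if y: "y \<in> Sn n" for y
  proof -
    let ?K = "KL n (inv y)"
    have iy: "inv y \<in> Sn n" using y by auto
    have k1: "?K = (\<Sum>z\<in>Sn n. hscale (\<Sum>w\<in>Sn n. ?K w * E w z) (KL n z))"
      by (rule Hn_KL_expansion[OF E KL_Hn[OF iy]])
    have k2: "?K = (\<Sum>z\<in>Sn n. hscale (if z = inv y then 1 else 0) (KL n z))"
      by (rule sum_hscale_indicator[symmetric, OF iy Sn_finite])
    have "(\<Sum>w\<in>Sn n. ?K w * E w (inv x)) = (if inv x = inv y then 1 else 0)"
      using KL_coeffs_unique[OF trans[OF k1[symmetric] k2] Sn_inv[OF x]] by simp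
    moreover have "inv x = inv y \<longleftrightarrow> x = y"
      using x y by (metis Sn_inv_inv)
    moreover have "tau (hmult n D ?K) = (\<Sum>w\<in>Sn n. ?K w * E w (inv x))"
      unfolding tau_hmult by (rule sum.cong) (auto simp: D_def)
    ultimately show ?thesis by simp
  qed
  moreover have "D \<in> Hn n" unfolding Hn_def D_def by simp
  ultimately show ?thesis unfolding is_DKL_def by blast
qed

lemma is_DKL_DKL: "x \<in> Sn n \<Longrightarrow> is_DKL n x (DKL n x)"
  unfolding DKL_def' using DKL_exists is_DKL_unique by (metis theI)

lemma DKL_eqI: "x \<in> Sn n \<Longrightarrow> is_DKL n x h \<Longrightarrow> DKL n x = h"
  using is_DKL_DKL is_DKL_unique by blast

lemma DKL_Hn: "x \<in> Sn n \<Longrightarrow> DKL n x \<in> Hn n"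
  using is_DKL_DKL is_DKL_def by blast

lemma tau_hmult_DKL_KL:
  assumes z: "z \<in> Sn n" and w: "w \<in> Sn n"
  shows "tau (hmult n (DKL n z) (KL n w)) = (if w = inv z then 1 else 0)"
proof -
  have "tau (hmult n (DKL n z) (KL n (inv (inv w)))) = (if z = inv w then 1 else 0)"
    using is_DKL_DKL[OF z] Sn_inv[OF w] unfolding is_DKL_def by blast
  moreover have "z = inv w \<longleftrightarrow> w = inv z"
    using z w by (metis Sn_inv_inv)
  ultimately show ?thesis using w by simp
qed

lemma tau_hmult_DKL_KL_combination:
  assumes z: "z \<in> Sn n"
  shows "tau (hmult n (DKL n z) (\<Sum>w\<in>Sn n. hscale (c w) (KL n w))) = c (inv z)"
proof -
  have "tau (hmult n (DKL n z) (\<Sum>w\<in>Sn n. hscale (c w) (KL n w)))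
      = (\<Sum>w\<in>Sn n. c w * tau (hmult n (DKL n z) (KL n w)))"
    unfolding hlinear_sum[OF hlinear_hmult_right] hlinear_scale[OF hlinear_hmult_right] tau_sum by simp
  also have "\<dots> = (\<Sum>w\<in>Sn n. if w = inv z then c w else 0)"
    by (rule sum.cong) (simp_all add: tau_hmult_DKL_KL[OF z])
  also have "\<dots> = c (inv z)" using z by (simp add: Sn_inv)
  finally show ?thesis .
qed

lemma hmult_DKL_KL_neq_zero:
  assumes x: "x \<in> Sn n" and z: "z \<in> Sn n" and le: "KL_R_le n x (inv z)"
  shows "hmult n (DKL n z) (KL n x) \<noteq> hzero"
proof
  assume vanish: "hmult n (DKL n z) (KL n x) = hzero"
  obtain h c where h: "h \<in> Hn n" and c: "c (inv z) \<noteq> 0"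
    and hc: "hmult n (KL n x) h = hsum n (\<lambda>w. hscale (c w) (KL n w))"
    using le unfolding KL_R_le_def by blast
  have "c (inv z) = tau (hmult n (DKL n z) (hmult n (KL n x) h))"
    using tau_hmult_DKL_KL_combination[OF z] by (simp add: hc hsum_eq)
  also have "\<dots> = tau (hmult n (hmult n (DKL n z) (KL n x)) h)"
    using hmult_assoc[OF DKL_Hn[OF z] KL_Hn[OF x] h] by simp
  also have "\<dots> = 0"
    using vanish hlinear_zero[OF hlinear_hmult_left] by (simp add: hzero_eq)
  finally show False using c by simp
qed


section \<open>The embedding of symmetric groups\<close>

definition perm_shift :: "nat \<Rightarrow> (nat \<Rightarrow> nat) \<Rightarrow> nat \<Rightarrow> nat" where
  "perm_shift d w k = (if d < k then w (k - d) + d else k)"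

definition keeps_pos :: "(nat \<Rightarrow> nat) \<Rightarrow> bool" where
  "keeps_pos y \<longleftrightarrow> (\<forall>j. 0 < j \<longrightarrow> 0 < y j)"

lemma perm_shift_apply_shift[simp]: "0 < k \<Longrightarrow> perm_shift d w (k + d) = w k + d"
  by (simp add: perm_shift_def)

lemma perm_shift_sg: "1 \<le> a \<Longrightarrow> perm_shift d (sg a) = sg (a + d)"
  by (rule ext) (auto simp: perm_shift_def sg_apply)

lemma perm_shift_transpose: "1 \<le> p \<Longrightarrow> 1 \<le> q \<Longrightarrow>
  perm_shift d (Transposition.transpose p q) = Transposition.transpose (p + d) (q + d)"
  by (rule ext) (auto simp: perm_shift_def transpose_def)

lemma perm_shift_id[simp]: "perm_shift d id = id"
  by (rule ext) (simp add: perm_shift_def)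

lemma perm_shift_comp: "keeps_pos y \<Longrightarrow> perm_shift d (x \<circ> y) = perm_shift d x \<circ> perm_shift d y"
  by (rule ext) (auto simp: perm_shift_def keeps_pos_def)

lemma keeps_pos_sg: "1 \<le> a \<Longrightarrow> keeps_pos (sg a)"
  by (auto simp: keeps_pos_def sg_apply)

lemma keeps_pos_Sn: "x \<in> Sn m \<Longrightarrow> keeps_pos x"
  unfolding keeps_pos_def
proof (intro allI impI)
  fix j :: nat assume x: "x \<in> Sn m" and j: "0 < j"
  show "0 < x j"
  proof (cases "j \<in> {1..m}")
    case True then show ?thesis using Sn_in[OF x True] by auto
  next
    case False then show ?thesis using Sn_out[OF x False] j by simp
  qed
qed

lemma keeps_pos_word_prod: "set as \<subseteq> {1..} \<Longrightarrow> keeps_pos (word_prod as)"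
  by (induction as) (auto simp: keeps_pos_def sg_apply)

lemma perm_shift_word_prod: "set as \<subseteq> {1..} \<Longrightarrow> word_prod (map (\<lambda>a. a + d) as) = perm_shift d (word_prod as)"
proof (induction as)
  case Nil then show ?case by simp
next
  case (Cons a as)
  have a: "1 \<le> a" using Cons.prems by auto
  have p: "keeps_pos (word_prod as)" using Cons.prems by (intro keeps_pos_word_prod) auto
  have "word_prod (map (\<lambda>a. a + d) (a # as)) = sg (a + d) \<circ> perm_shift d (word_prod as)"
    using Cons by simp
  also have "\<dots> = perm_shift d (sg a) \<circ> perm_shift d (word_prod as)" using perm_shift_sg[OF a] by simp
  also have "\<dots> = perm_shift d (sg a \<circ> word_prod as)" using perm_shift_comp[OF p] by simp
  finally show ?case by (simp only: word_prod_cons)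
qed

lemma reduced_shift:
  assumes r: "reduced m as" and bound: "d + m \<le> n"
  shows "reduced n (map (\<lambda>a. a + d) as)"
  using r
proof (induction as rule: rev_induct)
  case Nil then show ?case by simp
next
  case (snoc a as)
  have ra: "reduced m as" using reduced_append1 snoc.prems by blast
  note rl = reduced_snoc_len[OF snoc.prems]
  have IH: "reduced n (map (\<lambda>a. a + d) as)" by (rule snoc.IH[OF ra])
  have s: "set as \<subseteq> {1..}" using ra by (auto simp: reduced_def)
  have a': "1 \<le> a + d" "a + d < n" using rl(3,4) bound by auto
  have "word_prod (map (\<lambda>a. a + d) as) (a + d) < word_prod (map (\<lambda>a. a + d) as) (a + d + 1)"
    using perm_shift_word_prod[OF s, of d] rl(2,3) perm_shift_apply_shift[of a d] perm_shift_apply_shift[of "a+1" d]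
    by (simp add: add.commute add.left_commute)
  then show ?case using reduced_snoc[OF IH a'] by simp
qed

locale shift_embedding =
  fixes m n i :: nat
  assumes mn: "m \<le> n" and i1: "1 \<le> i" and im: "i \<le> n - m + 1"
begin

definition d :: nat where "d = i - 1"

lemma offset_bound: "d + m \<le> n" using mn i1 im unfolding d_def by linarith

lemma Femb_perm_shift: "x \<in> Sn m \<Longrightarrow> Femb m n i x = perm_shift d x"
proof -
  assume x: "x \<in> Sn m"
  have "map (\<lambda>a. a + i - 1) (rword m x) = map (\<lambda>a. a + d) (rword m x)"
    using i1 unfolding d_def by (intro map_cong) auto
  moreover have "set (rword m x) \<subseteq> {1..}" using rword_set[OF x] by auto
  ultimately show ?thesis unfolding Femb_def using perm_shift_word_prod rword_spec(3)[OF x] by metis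
qed

lemma perm_shift_reduced: "x \<in> Sn m \<Longrightarrow> reduced n (map (\<lambda>a. a + d) (rword m x))
   \<and> word_prod (map (\<lambda>a. a + d) (rword m x)) = perm_shift d x"
  using reduced_shift[OF rword_reduced offset_bound] perm_shift_word_prod rword_spec(3) rword_set by (metis atLeast_iff subset_iff atLeastLessThan_iff)

lemma perm_shift_Sn: "x \<in> Sn m \<Longrightarrow> perm_shift d x \<in> Sn n"
  using perm_shift_reduced word_prod_Sn reduced_def by metis

lemma len_perm_shift: "x \<in> Sn m \<Longrightarrow> len n (perm_shift d x) = len m x"
  using perm_shift_reduced rword_spec(2) reduced_def by (metis length_map)

lemma perm_shift_inj: "x \<in> Sn m \<Longrightarrow> y \<in> Sn m \<Longrightarrow> perm_shift d x = perm_shift d y \<Longrightarrow> x = y"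
proof (rule ext)
  fix k assume x: "x \<in> Sn m" and y: "y \<in> Sn m" and e: "perm_shift d x = perm_shift d y"
  show "x k = y k"
  proof (cases "k = 0")
    case True then show ?thesis using Sn_out[OF x, of 0] Sn_out[OF y, of 0] by simp
  next
    case False
    then have "perm_shift d x (k + d) = perm_shift d y (k + d)" using e by simp
    then show ?thesis using False by simp
  qed
qed

lemma perm_shift_comp_Sn: "x \<in> Sn m \<Longrightarrow> y \<in> Sn m \<Longrightarrow> perm_shift d (x \<circ> y) = perm_shift d x \<circ> perm_shift d y"
  using perm_shift_comp keeps_pos_Sn by blast

lemma perm_shift_inv: "x \<in> Sn m \<Longrightarrow> perm_shift d (inv x) = inv (perm_shift d x)"
proof -
  assume x: "x \<in> Sn m"
  have ix: "inv x \<in> Sn m" using x by auto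
  have "perm_shift d x \<circ> perm_shift d (inv x) = id" using perm_shift_comp_Sn[OF x ix] Sn_inv_comp(1)[OF x] by simp
  moreover have "perm_shift d (inv x) \<circ> perm_shift d x = id" using perm_shift_comp_Sn[OF ix x] Sn_inv_comp(2)[OF x] by simp
  ultimately show ?thesis by (metis inv_unique_comp)
qed

lemma perm_shift_sg_comp: "x \<in> Sn m \<Longrightarrow> 1 \<le> a \<Longrightarrow> perm_shift d (x \<circ> sg a) = perm_shift d x \<circ> sg (a + d)"
  using perm_shift_comp[OF keeps_pos_sg] perm_shift_sg by simp

lemma perm_shift_desc: "u \<in> Sn m \<Longrightarrow> 1 \<le> a \<Longrightarrow> a < m \<Longrightarrow>
  (len n (perm_shift d u \<circ> sg (a + d)) < len n (perm_shift d u) \<longleftrightarrow> len m (u \<circ> sg a) < len m u)"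
proof -
  assume u: "u \<in> Sn m" and a: "1 \<le> a" "a < m"
  have a': "1 \<le> a + d" "a + d < n" using a offset_bound by auto
  have "len n (perm_shift d u \<circ> sg (a + d)) < len n (perm_shift d u) \<longleftrightarrow> perm_shift d u (a + d + 1) < perm_shift d u (a + d)"
    by (rule len_sg_less_iff[OF perm_shift_Sn[OF u] a'])
  also have "\<dots> \<longleftrightarrow> u (a + 1) < u a"
    using perm_shift_apply_shift[of a d u] perm_shift_apply_shift[of "a+1" d u] a by (simp add: add.commute add.left_commute)
  also have "\<dots> \<longleftrightarrow> len m (u \<circ> sg a) < len m u" using len_sg_less_iff[OF u a] by simp
  finally show ?thesis .
qed

lemma bruhat_step_perm_shift:
  assumes "(y, x) \<in> bruhat_step m"
  shows "(perm_shift d y, perm_shift d x) \<in> bruhat_step n"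
proof -
  obtain p q where pq: "x = y \<circ> Transposition.transpose p q" "y \<in> Sn m" "1 \<le> p" "p < q" "q \<le> m"
      "len m y < len m (y \<circ> Transposition.transpose p q)"
    using assms unfolding bruhat_step_def by blast
  have t: "Transposition.transpose p q \<in> Sn m" using pq transpose_Sn by blast
  have shift_x: "perm_shift d x = perm_shift d y \<circ> Transposition.transpose (p + d) (q + d)"
    using pq(1) perm_shift_comp_Sn[OF pq(2) t] perm_shift_transpose[of p q d] pq(3,4) by simp
  have "len n (perm_shift d y) < len n (perm_shift d x)"
    using len_perm_shift[OF pq(2)] len_perm_shift[OF Sn_comp[OF pq(2) t]] pq by simp
  then show ?thesis
    using bruhat_stepI[OF perm_shift_Sn[OF pq(2)], of "p + d" "q + d"] pq offset_bound shift_x by simp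
qed

lemma bruhat_perm_shift:
  assumes "bruhat_lt m y x"
  shows "bruhat_lt n (perm_shift d y) (perm_shift d x)"
proof -
  have "(y, x) \<in> (bruhat_step m)\<^sup>+" using assms by (simp add: bruhat_lt_def)
  then have "(perm_shift d y, perm_shift d x) \<in> (bruhat_step n)\<^sup>+"
    by (induction rule: trancl_induct) (auto intro: bruhat_step_perm_shift trancl_into_trancl)
  then show ?thesis by (simp add: bruhat_lt_def)
qed

end

section \<open>The induced maps between Hecke algebras\<close>

(* The maps F_* and pi of the proof idea, for the shift by d. *)
definition hembed :: "nat \<Rightarrow> nat \<Rightarrow> hecke \<Rightarrow> hecke" where
  "hembed m d h = (\<Sum>u\<in>Sn m. hscale (h u) (Tb (perm_shift d u)))"

definition hrestrict :: "nat \<Rightarrow> nat \<Rightarrow> hecke \<Rightarrow> hecke" where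
  "hrestrict m d h = (\<lambda>u. if u \<in> Sn m then h (perm_shift d u) else 0)"

lemma hlinear_hembed: "hlinear (hembed m d)"
  by (rule hlinearI) (simp_all add: hembed_def hscale_add2 sum.distrib hscale_sum)

lemma hlinear_hrestrict: "hlinear (hrestrict m d)"
  by (rule hlinearI; rule ext) (simp_all add: hrestrict_def)

lemma hrestrict_Hn: "hrestrict m d h \<in> Hn m"
  unfolding Hn_def hrestrict_def by simp

lemma tau_hrestrict: "tau (hrestrict m d h) = tau h"
  unfolding tau_def hrestrict_def by simp

context shift_embedding begin

lemma hembed_Hn: "hembed m d h \<in> Hn n"
  unfolding hembed_def by (intro Hn_sum Hn_scale Hn_Tb perm_shift_Sn)

lemma hembed_Tb: "u \<in> Sn m \<Longrightarrow> hembed m d (Tb u) = Tb (perm_shift d u)"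
proof -
  assume u: "u \<in> Sn m"
  have "hembed m d (Tb u) = (\<Sum>x\<in>Sn m. if x = u then Tb (perm_shift d x) else 0)"
    unfolding hembed_def by (rule sum.cong) (auto simp: Tb_apply)
  also have "\<dots> = Tb (perm_shift d u)" using u by simp
  finally show ?thesis .
qed

lemma hembed_apply: "hembed m d h w = (\<Sum>u\<in>Sn m. if w = perm_shift d u then h u else 0)"
  unfolding hembed_def sum_fun_apply by (rule sum.cong) (auto simp: Tb_apply)

lemma hembed_perm_shift: "u \<in> Sn m \<Longrightarrow> hembed m d h (perm_shift d u) = h u"
proof -
  assume u: "u \<in> Sn m"
  have "hembed m d h (perm_shift d u) = (\<Sum>x\<in>Sn m. if x = u then h x else 0)"
    unfolding hembed_apply by (rule sum.cong) (use perm_shift_inj u in auto)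
  also have "\<dots> = h u" using u by simp
  finally show ?thesis .
qed

lemma hembed_nz: "hembed m d h w \<noteq> 0 \<Longrightarrow> \<exists>u\<in>Sn m. w = perm_shift d u"
proof -
  assume "hembed m d h w \<noteq> 0"
  then obtain u where "u \<in> Sn m" "(if w = perm_shift d u then h u else 0) \<noteq> 0"
    unfolding hembed_apply by (rule sum.not_neutral_contains_not_neutral)
  then show ?thesis by (auto split: if_splits)
qed

lemma hrestrict_mult_s:
  assumes a: "1 \<le> a" "a < m"
  shows "hrestrict m d (mult_s n h (a + d)) = mult_s m (hrestrict m d h) a"
proof (rule ext)
  fix u
  show "hrestrict m d (mult_s n h (a + d)) u = mult_s m (hrestrict m d h) a u"
  proof (cases "u \<in> Sn m")
    case False
    have "u \<circ> sg a \<notin> Sn m" by (rule not_Sn_comp[OF False sg_Sn[OF a]])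
    then show ?thesis using False by (simp add: hrestrict_def mult_s_def)
  next
    case True
    have us: "u \<circ> sg a \<in> Sn m" using True a by (simp add: Sn_comp sg_Sn)
    show ?thesis
      using True us perm_shift_sg_comp[OF True a(1)] perm_shift_desc[OF True a]
      by (simp add: hrestrict_def mult_s_def)
  qed
qed

lemma hrestrict_mult_word: "set as \<subseteq> {1..<m} \<Longrightarrow> hrestrict m d (mult_word n h (map (\<lambda>a. a + d) as)) = mult_word m (hrestrict m d h) as"
proof (induction as arbitrary: h)
  case (Cons a as)
  have a: "1 \<le> a" "a < m" using Cons.prems by auto
  have "hrestrict m d (mult_word n h (map (\<lambda>a. a + d) (a # as))) = hrestrict m d (mult_word n (mult_s n h (a + d)) (map (\<lambda>a. a + d) as))"
    by simp
  also have "\<dots> = mult_word m (hrestrict m d (mult_s n h (a + d))) as" using Cons by simp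
  also have "\<dots> = mult_word m (hrestrict m d h) (a # as)" using hrestrict_mult_s[OF a] by simp
  finally show ?case .
qed simp

lemma hrestrict_hmult_hembed:
  assumes h: "h \<in> Hn n" and g: "g \<in> Hn m"
  shows "hrestrict m d (hmult n h (hembed m d g)) = hmult m (hrestrict m d h) g"
proof -
  have "hmult n h (hembed m d g) = (\<Sum>u\<in>Sn m. hscale (g u) (mult_word n h (map (\<lambda>a. a + d) (rword m u))))"
    unfolding hembed_def hlinear_sum[OF hlinear_hmult_right] hlinear_scale[OF hlinear_hmult_right]
  proof (rule sum.cong[OF refl])
    fix u assume u: "u \<in> Sn m"
    show "hscale (g u) (hmult n h (Tb (perm_shift d u))) = hscale (g u) (mult_word n h (map (\<lambda>a. a + d) (rword m u)))"
      using hmult_Tb_reduced[OF h, of "map (\<lambda>a. a + d) (rword m u)"] perm_shift_reduced[OF u] by simp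
  qed
  then have "hrestrict m d (hmult n h (hembed m d g)) = (\<Sum>u\<in>Sn m. hscale (g u) (hrestrict m d (mult_word n h (map (\<lambda>a. a + d) (rword m u)))))"
    by (simp add: hlinear_sum[OF hlinear_hrestrict] hlinear_scale[OF hlinear_hrestrict])
  also have "\<dots> = (\<Sum>u\<in>Sn m. hscale (g u) (mult_word m (hrestrict m d h) (rword m u)))"
    by (rule sum.cong[OF refl]) (simp add: hrestrict_mult_word[OF rword_set])
  also have "\<dots> = hmult m (hrestrict m d h) g" by (simp add: hmult_eq)
  finally show ?thesis .
qed

lemma hembed_mult_s:
  assumes X: "X \<in> Hn m" and a: "1 \<le> a" "a < m"
  shows "hembed m d (mult_s m X a) = mult_s n (hembed m d X) (a + d)"
proof (rule hlinear_eq_on_Hn[where F="\<lambda>X. hembed m d (mult_s m X a)" and G="\<lambda>X. mult_s n (hembed m d X) (a + d)", OF _ _ _ X])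
  show "hlinear (\<lambda>X. hembed m d (mult_s m X a))"
    using hlinear_comp[OF hlinear_hembed hlinear_mult_s] by (simp add: comp_def)
  show "hlinear (\<lambda>X. mult_s n (hembed m d X) (a + d))"
    using hlinear_comp[OF hlinear_mult_s hlinear_hembed] by (simp add: comp_def)
next
  fix u assume u: "u \<in> Sn m"
  have a': "1 \<le> a + d" "a + d < n" using a offset_bound by auto
  have su: "perm_shift d u \<in> Sn n" by (rule perm_shift_Sn[OF u])
  have us: "u \<circ> sg a \<in> Sn m" using u a by (simp add: Sn_comp sg_Sn)
  have v1: "perm_shift d u (a + d) = u a + d" "perm_shift d u (a + d + 1) = u (a + 1) + d"
    using perm_shift_apply_shift[of a d u] perm_shift_apply_shift[of "a+1" d u] a by (simp_all add: add.commute add.left_commute)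
  have ne: "u a \<noteq> u (a + 1)" using Sn_inj[OF u] by (simp add: inj_eq)
  show "hembed m d (mult_s m (Tb u) a) = mult_s n (hembed m d (Tb u)) (a + d)"
  proof (cases "u a < u (a + 1)")
    case True
    then show ?thesis using mult_s_Tb_up[OF u a True] mult_s_Tb_up[OF su a'] v1
      hembed_Tb[OF us] hembed_Tb[OF u] perm_shift_sg_comp[OF u a(1)] by simp
  next
    case False
    then have lt: "u (a + 1) < u a" using ne by simp
    show ?thesis using mult_s_Tb_down[OF u a lt] mult_s_Tb_down[OF su a'] v1 lt
      hembed_Tb[OF us] hembed_Tb[OF u] perm_shift_sg_comp[OF u a(1)] hlinear_add[OF hlinear_hembed] hlinear_scale[OF hlinear_hembed] by simp
  qed
qed

lemma hembed_mult_sinv: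
  assumes X: "X \<in> Hn m" and a: "1 \<le> a" "a < m"
  shows "hembed m d (mult_sinv m X a) = mult_sinv n (hembed m d X) (a + d)"
  unfolding mult_sinv_eq hlinear_add[OF hlinear_hembed] hlinear_scale[OF hlinear_hembed] hembed_mult_s[OF X a] ..

lemma hembed_mult_inv_word: "X \<in> Hn m \<Longrightarrow> set as \<subseteq> {1..<m} \<Longrightarrow> hembed m d (mult_inv_word m X as) = mult_inv_word n (hembed m d X) (map (\<lambda>a. a + d) as)"
proof (induction as arbitrary: X)
  case (Cons a as)
  have a: "1 \<le> a" "a < m" using Cons.prems by auto
  have "hembed m d (mult_inv_word m X (a # as)) = hembed m d (mult_inv_word m (mult_sinv m X a) as)" by simp
  also have "\<dots> = mult_inv_word n (hembed m d (mult_sinv m X a)) (map (\<lambda>a. a + d) as)"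
    using Cons.IH[OF Hn_mult_sinv[OF Cons.prems(1) a]] Cons.prems by simp
  also have "\<dots> = mult_inv_word n (hembed m d X) (map (\<lambda>a. a + d) (a # as))"
    using hembed_mult_sinv[OF Cons.prems(1) a] by simp
  finally show ?case .
qed simp

lemma hembed_barT: "u \<in> Sn m \<Longrightarrow> hembed m d (barT m u) = barT n (perm_shift d u)"
proof -
  assume u: "u \<in> Sn m"
  have r: "reduced n (map (\<lambda>a. a + d) (rword m u))" and w: "word_prod (map (\<lambda>a. a + d) (rword m u)) = perm_shift d u"
    using perm_shift_reduced[OF u] by auto
  have "hembed m d (barT m u) = mult_inv_word n (Tb id) (map (\<lambda>a. a + d) (rword m u))"
    unfolding barT_mult_inv_word by (rule hembed_mult_inv_word[OF Hn_Tb[OF Sn_id] rword_set[OF u], unfolded hembed_Tb[OF Sn_id] perm_shift_id])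
  also have "\<dots> = barT n (perm_shift d u)"
    by (rule barT_word[OF r, unfolded w, symmetric])
  finally show ?thesis .
qed

lemma hembed_hbar: assumes X: "X \<in> Hn m" shows "hembed m d (hbar m X) = hbar n (hembed m d X)"
proof (rule hantilinear_eq_on_Hn[where F="\<lambda>X. hembed m d (hbar m X)" and G="\<lambda>X. hbar n (hembed m d X)", OF _ _ _ X])
  show "hantilinear (\<lambda>X. hembed m d (hbar m X))"
    using hantilinear_comp1[OF hlinear_hembed hantilinear_hbar] by (simp add: comp_def)
  show "hantilinear (\<lambda>X. hbar n (hembed m d X))"
    using hantilinear_comp2[OF hantilinear_hbar hlinear_hembed] by (simp add: comp_def)
next
  fix u assume u: "u \<in> Sn m"
  show "hembed m d (hbar m (Tb u)) = hbar n (hembed m d (Tb u))"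
    using hbar_Tb[OF u] hembed_Tb[OF u] hembed_barT[OF u] hbar_Tb[OF perm_shift_Sn[OF u]] by simp
qed

lemma hembed_KL: "x \<in> Sn m \<Longrightarrow> hembed m d (KL m x) = KL n (perm_shift d x)"
proof -
  assume x: "x \<in> Sn m"
  let ?K = "KL m x"
  have K: "is_KL m x ?K" by (rule is_KL_KL[OF x])
  have "is_KL n (perm_shift d x) (hembed m d ?K)"
    unfolding is_KL_def
  proof (intro conjI allI impI)
    show "hembed m d ?K \<in> Hn n" by (rule hembed_Hn)
    show "hbar n (hembed m d ?K) = hembed m d ?K" using hembed_hbar[OF is_KL_D(1)[OF K]] is_KL_D(2)[OF K] by simp
    show "hembed m d ?K (perm_shift d x) = 1" using hembed_perm_shift[OF x] is_KL_D(3)[OF K] by simp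
  next
    fix y assume y: "y \<noteq> perm_shift d x" and nz: "hembed m d ?K y \<noteq> 0"
    obtain u where u: "u \<in> Sn m" "y = perm_shift d u" using hembed_nz[OF nz] by blast
    have "u \<noteq> x" using y u by auto
    moreover have "?K u \<noteq> 0" using nz u hembed_perm_shift by simp
    ultimately have "bruhat_lt m u x" using is_KL_D(4)[OF K] by blast
    then show "bruhat_lt n y (perm_shift d x)" using bruhat_perm_shift u by simp
  next
    fix y assume y: "y \<noteq> perm_shift d x"
    show "in_vZv (hembed m d ?K y)"
    proof (cases "hembed m d ?K y = 0")
      case False
      obtain u where u: "u \<in> Sn m" "y = perm_shift d u" using hembed_nz[OF False] by blast
      have "u \<noteq> x" using y u by auto
      then show ?thesis using is_KL_D(5)[OF K] hembed_perm_shift u by simp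
    qed simp
  qed
  then show ?thesis using KL_eqI[OF perm_shift_Sn[OF x]] by simp
qed

lemma hrestrict_DKL: "z \<in> Sn m \<Longrightarrow> hrestrict m d (DKL n (perm_shift d z)) = DKL m z"
proof -
  assume z: "z \<in> Sn m"
  let ?D = "DKL n (perm_shift d z)"
  have D: "is_DKL n (perm_shift d z) ?D" by (rule is_DKL_DKL[OF perm_shift_Sn[OF z]])
  have "is_DKL m z (hrestrict m d ?D)"
    unfolding is_DKL_def
  proof (intro conjI ballI)
    show "hrestrict m d ?D \<in> Hn m" by (rule hrestrict_Hn)
  next
    fix y assume y: "y \<in> Sn m"
    have iy: "inv y \<in> Sn m" using y by auto
    have "tau (hmult m (hrestrict m d ?D) (KL m (inv y))) = tau (hrestrict m d (hmult n ?D (hembed m d (KL m (inv y)))))"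
      using hrestrict_hmult_hembed[OF DKL_Hn[OF perm_shift_Sn[OF z]] KL_Hn[OF iy]] by simp
    also have "\<dots> = tau (hmult n ?D (KL n (inv (perm_shift d y))))"
      using tau_hrestrict hembed_KL[OF iy] perm_shift_inv[OF y] by simp
    also have "\<dots> = (if perm_shift d z = perm_shift d y then 1 else 0)"
      using D perm_shift_Sn[OF y] unfolding is_DKL_def by blast
    also have "\<dots> = (if z = y then 1 else 0)" using perm_shift_inj[OF z y] by auto
    finally show "tau (hmult m (hrestrict m d ?D) (KL m (inv y))) = (if z = y then 1 else 0)" .
  qed
  then show ?thesis using DKL_eqI[OF z] by simp
qed

lemma hmult_DKL_KL_eq_hrestrict:
  assumes z: "z \<in> Sn m" and u: "u \<in> Sn m"
  shows "hmult m (DKL m z) (KL m u)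
    = hrestrict m d (hmult n (DKL n (Femb m n i z)) (KL n (Femb m n i u)))"
proof -
  have "hrestrict m d (hmult n (DKL n (Femb m n i z)) (KL n (Femb m n i u)))
      = hrestrict m d (hmult n (DKL n (perm_shift d z)) (hembed m d (KL m u)))"
    using Femb_perm_shift[OF z] Femb_perm_shift[OF u] hembed_KL[OF u] by simp
  also have "\<dots> = hmult m (hrestrict m d (DKL n (perm_shift d z))) (KL m u)"
    by (rule hrestrict_hmult_hembed[OF DKL_Hn[OF perm_shift_Sn[OF z]] KL_Hn[OF u]])
  also have "\<dots> = hmult m (DKL m z) (KL m u)"
    using hrestrict_DKL[OF z] by simp
  finally show ?thesis by simp
qed

end


theorem lemma3p18:
  fixes m n i :: nat and x y z :: "nat \<Rightarrow> nat"
  assumes "2 \<le> m" and "m \<le> n" and "1 \<le> i" and "i \<le> n - m + 1"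
    and "x \<in> Sn m" and "y \<in> Sn m" and "z \<in> Sn m"
    and "KL_R_le m x (inv z)" and "KL_R_le m y (inv z)"
    and "hmult n (DKL n (Femb m n i z)) (KL n (Femb m n i x))
         = hmult n (DKL n (Femb m n i z)) (KL n (Femb m n i y))"
    and "hmult n (DKL n (Femb m n i z)) (KL n (Femb m n i x)) \<noteq> hzero"
  shows "hmult m (DKL m z) (KL m x) = hmult m (DKL m z) (KL m y)
         \<and> hmult m (DKL m z) (KL m x) \<noteq> hzero"
proof -
  interpret shift_embedding m n i
    using assms(2-4) by unfold_locales
  have "hmult m (DKL m z) (KL m x) = hmult m (DKL m z) (KL m y)"
    using hmult_DKL_KL_eq_hrestrict[OF assms(7,5)] hmult_DKL_KL_eq_hrestrict[OF assms(7,6)] assms(10)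
    by simp
  moreover have "hmult m (DKL m z) (KL m x) \<noteq> hzero"
    by (rule hmult_DKL_KL_neq_zero[OF assms(5,7,8)])
  ultimately show ?thesis ..
qed

end
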